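(* In the trilevel setting, assume $\limsup_{k\to\infty}\beta_k/\alpha_k=0$, $\alpha_k\to0$, $\sum_k\alpha_k=\infty$, and $\limsup_{k\to\infty}\frac{|\beta_k-\beta_{k-1}|+|\alpha_k-\alpha_{k-1}|}{\alpha_k\beta_k}=0$. Then the trilevel iteration sequence $\{x^k\}$ converges to the unique $x^*\in\mathrm{Fix}(W)$ satisfying \[\langle x^*-S(x^* ),x-x^*\rangle\ge0\quad\forall x\in\mathrm{Fix}(W),\] i.e. $\omega(x^* )=\min_{x\in Y^*}\omega(x)$.
   Context: Trilevel setting. Let $f_1,f_2:\mathbb R^n\to\mathbb R$ be convex and continuously differentiable with $L_{f_i}$-Lipschitz gradients, and $g_1,g_2:\mathbb R^n\to(-\infty,+\infty]$ proper, lower semicontinuous and convex; put $\phi_i=f_i+g_i$. Let $\omega:\mathbb R^n\to\mathbb R$ be $\mu$-strongly convex and continuously differentiable with $L_\omega$-Lipschitz gradient. Let $Y^*=\arg\min_{x\in\mathbb R^n}\phi_2(x)$ and $X^*=\arg\min_{x\in Y^*}\phi_1(x)$, both assumed nonempty. For a proper lsc convex $g$, $\mathrm{prox}_g(x)=\arg\min_{u}\{g(u)+\tfrac12\|u-x\|^2\}$. Fix $u\in(0,\tfrac{2}{L_\omega+\mu}]$, $t\in(0,1/L_{f_1}]$, $s\in(0,1/L_{f_2}]$ and define $S(x)=x-u\nabla\omega(x)$, $T(x)=\mathrm{prox}_{tg_1}(x-t\nabla f_1(x))$, $W(x)=\mathrm{prox}_{sg_2}(x-s\nabla f_2(x))$.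 Then $S$ is a contraction with constant $r=\sqrt{1-\tfrac{2u\mu L_\omega}{\mu+L_\omega}}\in[0,1)$, $T,W$ are nonexpansive, $\mathrm{Fix}(W)=Y^*$. Given $x^0\in\mathbb R^n$ and real sequences $\alpha_k,\beta_k\in(0,1)$, the trilevel iteration sequence is $x^{k+1}=\alpha_kS(x^k)+(1-\alpha_k)\beta_kT(x^k)+(1-\alpha_k)(1-\beta_k)W(x^k)$, $k\ge0$. *)

theory Defs
  imports "HOL-Analysis.Analysis"
begin

definition proper_fun :: "('a \<Rightarrow> ereal) \<Rightarrow> bool" where
  "proper_fun g \<longleftrightarrow> (\<forall>x. g x \<noteq> -\<infinity>) \<and> (\<exists>x. g x \<noteq> \<infinity>)"

definition lsc_fun :: "('a::topological_space \<Rightarrow> ereal) \<Rightarrow> bool" where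
  "lsc_fun g \<longleftrightarrow> (\<forall>x. g x \<le> Liminf (at x) g)"

definition convex_ereal_fun :: "('a::real_vector \<Rightarrow> ereal) \<Rightarrow> bool" where
  "convex_ereal_fun g \<longleftrightarrow>
     (\<forall>x y (l::real). 0 \<le> l \<and> l \<le> 1 \<longrightarrow>
        g ((1 - l) *\<^sub>R x + l *\<^sub>R y) \<le> ereal (1 - l) * g x + ereal l * g y)"

definition strongly_convex :: "real \<Rightarrow> ('a::real_inner \<Rightarrow> real) \<Rightarrow> bool" where
  "strongly_convex \<mu> w \<longleftrightarrow> convex_on UNIV (\<lambda>x. w x - (\<mu> / 2) * (norm x)\<^sup>2)"

definition prox :: "('a::real_normed_vector \<Rightarrow> ereal) \<Rightarrow> 'a \<Rightarrow> 'a" where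
  "prox g x = (THE u. \<forall>v. g u + ereal ((norm (u - x))\<^sup>2 / 2) \<le> g v + ereal ((norm (v - x))\<^sup>2 / 2))"

definition argmin_on :: "('a \<Rightarrow> ereal) \<Rightarrow> 'a set \<Rightarrow> 'a set" where
  "argmin_on h A = {x \<in> A. \<forall>y\<in>A. h x \<le> h y}"

end

theory Submission
  imports Defs
begin

text \<open>The map \<open>S\<close> is a contraction and the forward--backward maps \<open>T\<close>, \<open>W\<close> are
  nonexpansive with \<open>Fix W = Y\<^sup>*\<close>. Hence the variational inequality
  \<open>\<langle>x\<^sup>* - S x\<^sup>*, y - x\<^sup>*\<rangle> \<ge> 0\<close> on \<open>Y\<^sup>*\<close> has exactly one solution, the fixed point of the projection
  onto \<open>Y\<^sup>*\<close> composed with \<open>S\<close>; as \<open>x\<^sup>* - S x\<^sup>* = u \<nabla>\<omega>(x\<^sup>*)\<close>, it minimises \<open>\<omega>\<close> over \<open>Y\<^sup>*\<close>.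
  Along the iteration, \<open>\<beta>\<^sub>k = o(\<alpha>\<^sub>k)\<close> keeps the iterates bounded, and the conditions on the
  increments of the weights give \<open>x\<^sup>k\<^sup>+\<^sup>1 - x\<^sup>k \<rightarrow> 0\<close> by Xu's lemma. Then \<open>x\<^sup>k - W x\<^sup>k \<rightarrow> 0\<close>,
  every cluster point lies in \<open>Fix W\<close>, and \<open>limsup \<langle>S x\<^sup>* - x\<^sup>*, x\<^sup>k - x\<^sup>*\<rangle> \<le> 0\<close>; a second
  application of Xu's lemma, to \<open>|x\<^sup>k - x\<^sup>*|\<^sup>2\<close>, yields \<open>x\<^sup>k \<rightarrow> x\<^sup>*\<close>.\<close>

section \<open>Smooth convex functions\<close>

lemma power2_norm_diff_scaleR:
  fixes a b :: "'a::real_inner"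
  shows "(norm (a - t *\<^sub>R b))\<^sup>2 = (norm a)\<^sup>2 - 2 * t * (b \<bullet> a) + t\<^sup>2 * (norm b)\<^sup>2"
  unfolding power2_norm_eq_inner
  by (simp add: inner_diff_left inner_diff_right inner_commute algebra_simps power2_eq_square)

lemma has_real_derivative_along_line:
  fixes h :: "'a::real_inner \<Rightarrow> real"
  assumes "\<And>y. (h has_derivative (\<lambda>v. G y \<bullet> v)) (at y)"
  shows "((\<lambda>t. h (x + t *\<^sub>R d)) has_real_derivative (G (x + t *\<^sub>R d) \<bullet> d)) (at t)"
proof -
  have "((\<lambda>t. x + t *\<^sub>R d) has_derivative (\<lambda>s. s *\<^sub>R d)) (at t)"
    by (auto intro!: derivative_eq_intros)
  from has_derivative_compose[OF this assms]
  have "((\<lambda>t. h (x + t *\<^sub>R d)) has_derivative (\<lambda>s. s * (G (x + t *\<^sub>R d) \<bullet> d))) (at t)"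
    by (simp add: o_def)
  moreover have "(\<lambda>s. s * (G (x + t *\<^sub>R d) \<bullet> d)) = (*) (G (x + t *\<^sub>R d) \<bullet> d)"
    by (auto simp: mult.commute)
  ultimately show ?thesis
    by (simp add: has_field_derivative_def)
qed

lemma convex_on_gradient_inequality:
  fixes h :: "'a::real_inner \<Rightarrow> real"
  assumes cv: "convex_on UNIV h"
    and hd: "\<And>y. (h has_derivative (\<lambda>v. G y \<bullet> v)) (at y)"
  shows "h x + G x \<bullet> (y - x) \<le> h y"
proof -
  define \<phi> where "\<phi> = (\<lambda>t. h (x + t *\<^sub>R (y - x)))"
  have "convex_on UNIV \<phi>"
    unfolding \<phi>_def
  proof (rule convex_onI)
    fix a s t :: real assume a: "0 < a" "a < 1"
    have "x + ((1 - a) *\<^sub>R s + a *\<^sub>R t) *\<^sub>R (y - x)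
        = (1 - a) *\<^sub>R (x + s *\<^sub>R (y - x)) + a *\<^sub>R (x + t *\<^sub>R (y - x))"
      by (simp add: algebra_simps)
    then show "h (x + ((1 - a) *\<^sub>R s + a *\<^sub>R t) *\<^sub>R (y - x))
        \<le> (1 - a) * h (x + s *\<^sub>R (y - x)) + a * h (x + t *\<^sub>R (y - x))"
      using convex_onD[OF cv, of a "x + s *\<^sub>R (y - x)" "x + t *\<^sub>R (y - x)"] a by simp
  qed simp
  moreover have "(\<phi> has_real_derivative (G x \<bullet> (y - x))) (at 0)"
    using has_real_derivative_along_line[OF hd, of x "y - x" 0] by (simp add: \<phi>_def)
  ultimately have "(G x \<bullet> (y - x)) * (1 - 0) \<le> \<phi> 1 - \<phi> 0"
    by (intro convex_on_imp_above_tangent[where A = UNIV]) auto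
  then show ?thesis by (simp add: \<phi>_def)
qed

lemma lipschitz_gradient_upper_bound:
  fixes h :: "'a::real_inner \<Rightarrow> real"
  assumes hd: "\<And>y. (h has_derivative (\<lambda>v. G y \<bullet> v)) (at y)"
    and lip: "L-lipschitz_on UNIV G"
  shows "h y \<le> h x + G x \<bullet> (y - x) + L / 2 * (norm (y - x))\<^sup>2"
proof -
  define d where "d = y - x"
  define \<psi> where "\<psi> t = h (x + t *\<^sub>R d) - t * (G x \<bullet> d) - L / 2 * t\<^sup>2 * (norm d)\<^sup>2" for t
  have der: "(\<psi> has_real_derivative ((G (x + t *\<^sub>R d) - G x) \<bullet> d - L * t * (norm d)\<^sup>2)) (at t)" for t
    unfolding \<psi>_def inner_diff_left
    by (rule derivative_eq_intros has_real_derivative_along_line[OF hd] refl | simp)+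
  have "\<psi> 1 \<le> \<psi> 0"
  proof (rule DERIV_nonpos_imp_decreasing_open[of 0 1 \<psi>])
    fix t :: real assume t: "0 < t" "t < 1"
    have "(G (x + t *\<^sub>R d) - G x) \<bullet> d \<le> norm (G (x + t *\<^sub>R d) - G x) * norm d"
      by (rule norm_cauchy_schwarz)
    also have "\<dots> \<le> L * (t * norm d) * norm d"
      using lipschitz_onD[OF lip, of "x + t *\<^sub>R d" x] t by (simp add: dist_norm mult_right_mono)
    finally have "(G (x + t *\<^sub>R d) - G x) \<bullet> d - L * t * (norm d)\<^sup>2 \<le> 0"
      by (simp add: power2_eq_square mult.assoc)
    with der show "\<exists>y. DERIV \<psi> t :> y \<and> y \<le> 0" by blast
  next
    show "continuous_on {0..1} \<psi>"
      by (meson der DERIV_isCont continuous_at_imp_continuous_on)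
  qed simp
  then show ?thesis by (simp add: \<psi>_def d_def)
qed

text \<open>Baillon--Haddad: evaluating the descent lemma at the gradient step
  \<open>y - (1/M) (G y - G x)\<close> sharpens the gradient inequality by \<open>|G y - G x|\<^sup>2 / (2 M)\<close>.\<close>

lemma gradient_cocoercive:
  fixes h :: "'a::real_inner \<Rightarrow> real"
  assumes lower: "\<And>x y. h x + G x \<bullet> (y - x) \<le> h y"
    and upper: "\<And>x y. h y \<le> h x + G x \<bullet> (y - x) + M / 2 * (norm (y - x))\<^sup>2"
    and M: "M > 0"
  shows "(norm (G x - G y))\<^sup>2 \<le> M * ((G x - G y) \<bullet> (x - y))"
proof -
  have sharp: "h x + G x \<bullet> (y - x) + 1 / (2 * M) * (norm (G y - G x))\<^sup>2 \<le> h y" for x y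
  proof -
    define z where "z = y - (1 / M) *\<^sub>R (G y - G x)"
    have "h x + G x \<bullet> (z - x) \<le> h y + G y \<bullet> (z - y) + M / 2 * (norm (z - y))\<^sup>2"
      using lower[of x z] upper[where x = y and y = z] by linarith
    moreover have "G x \<bullet> (z - x) = G x \<bullet> (y - x) - (1 / M) * (G x \<bullet> (G y - G x))"
      by (simp add: z_def inner_diff_right algebra_simps)
    moreover have "G y \<bullet> (z - y) = - ((1 / M) * (G y \<bullet> (G y - G x)))"
      by (simp add: z_def inner_diff_right algebra_simps)
    moreover have "norm (z - y) = (1 / M) * norm (G y - G x)"
      using M by (simp add: z_def)
    then have "M / 2 * (norm (z - y))\<^sup>2 = 1 / (2 * M) * (norm (G y - G x))\<^sup>2"
      using M by (simp add: power2_eq_square field_simps)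
    moreover have "(1 / M) * (norm (G y - G x))\<^sup>2
        = (1 / M) * (G y \<bullet> (G y - G x)) - (1 / M) * (G x \<bullet> (G y - G x))"
      by (simp add: power2_norm_eq_inner inner_diff_left right_diff_distrib)
    moreover have "1 / (2 * M) * (norm (G y - G x))\<^sup>2 = (1 / M) * (norm (G y - G x))\<^sup>2 / 2"
      by simp
    ultimately show ?thesis by linarith
  qed
  have "(G x - G y) \<bullet> (x - y) = - (G x \<bullet> (y - x)) - G y \<bullet> (x - y)"
    by (simp add: inner_diff algebra_simps)
  with sharp[of x y] sharp[of y x] have "2 * (1 / (2 * M) * (norm (G x - G y))\<^sup>2) \<le> (G x - G y) \<bullet> (x - y)"
    by (simp add: norm_minus_commute)
  then show ?thesis using M by (simp add: field_simps)
qed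

lemma gradient_step_nonexpansive:
  fixes f :: "'a::real_inner \<Rightarrow> real"
  assumes cv: "convex_on UNIV f"
    and fd: "\<And>y. (f has_derivative (\<lambda>v. df y \<bullet> v)) (at y)"
    and lip: "M-lipschitz_on UNIV df" and M: "M > 0"
    and t: "0 < t" "t \<le> 1 / M"
  shows "norm ((x - t *\<^sub>R df x) - (y - t *\<^sub>R df y)) \<le> norm (x - y)"
proof -
  define D where "D = df x - df y"
  define e where "e = x - y"
  have co: "(norm D)\<^sup>2 \<le> M * (D \<bullet> e)"
    unfolding D_def e_def
    by (rule gradient_cocoercive[OF convex_on_gradient_inequality[OF cv fd]
          lipschitz_gradient_upper_bound[OF fd lip] M])
  have De: "0 \<le> D \<bullet> e"
    using co M zero_le_power2[of "norm D"] by (metis order_trans zero_le_mult_iff not_less)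
  have "t * (norm D)\<^sup>2 \<le> t * (M * (D \<bullet> e))"
    using co t by simp
  also have "\<dots> \<le> D \<bullet> e"
    using t M De mult_right_mono[of "t * M" 1 "D \<bullet> e"] by (simp add: field_simps)
  finally have "t\<^sup>2 * (norm D)\<^sup>2 \<le> t * (D \<bullet> e)"
    using t by (simp add: power2_eq_square mult.assoc mult_left_mono)
  moreover have "0 \<le> t * (D \<bullet> e)" using De t by simp
  ultimately have "(norm (e - t *\<^sub>R D))\<^sup>2 \<le> (norm e)\<^sup>2"
    unfolding power2_norm_diff_scaleR by linarith
  then have "norm (e - t *\<^sub>R D) \<le> norm e" by (rule power2_le_imp_le) simp
  moreover have "(x - t *\<^sub>R df x) - (y - t *\<^sub>R df y) = e - t *\<^sub>R D"
    by (simp add: D_def e_def algebra_simps)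
  ultimately show ?thesis by (simp only: e_def)
qed

lemma strongly_convex_shift:
  fixes \<omega> :: "'a::real_inner \<Rightarrow> real"
  assumes sc: "strongly_convex \<mu> \<omega>"
    and wd: "\<And>y. (\<omega> has_derivative (\<lambda>v. d\<omega> y \<bullet> v)) (at y)"
  shows "convex_on UNIV (\<lambda>x. \<omega> x - \<mu> / 2 * (x \<bullet> x))"
    and "((\<lambda>x. \<omega> x - \<mu> / 2 * (x \<bullet> x)) has_derivative (\<lambda>v. (d\<omega> y - \<mu> *\<^sub>R y) \<bullet> v)) (at y)"
  using sc unfolding strongly_convex_def
  by (auto simp: power2_norm_eq_inner inner_diff_left inner_commute algebra_simps
      intro!: derivative_eq_intros wd)

lemma strongly_convex_gradient_inequality:
  fixes \<omega> :: "'a::real_inner \<Rightarrow> real"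
  assumes sc: "strongly_convex \<mu> \<omega>"
    and wd: "\<And>y. (\<omega> has_derivative (\<lambda>v. d\<omega> y \<bullet> v)) (at y)"
  shows "\<omega> x + d\<omega> x \<bullet> (y - x) + \<mu> / 2 * (norm (y - x))\<^sup>2 \<le> \<omega> y"
proof -
  have "\<omega> x - \<mu> / 2 * (x \<bullet> x) + (d\<omega> x - \<mu> *\<^sub>R x) \<bullet> (y - x) \<le> \<omega> y - \<mu> / 2 * (y \<bullet> y)"
    by (rule convex_on_gradient_inequality[OF strongly_convex_shift[OF sc wd]])
  moreover have "(norm (y - x))\<^sup>2 = y \<bullet> y - 2 * (x \<bullet> (y - x)) - x \<bullet> x"
    by (simp add: power2_norm_eq_inner inner_diff inner_commute algebra_simps)
  ultimately show ?thesis
    by (simp only:) (simp add: inner_diff_left inner_diff_right algebra_simps)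
qed

lemma strongly_convex_gradient_monotone:
  fixes \<omega> :: "'a::real_inner \<Rightarrow> real"
  assumes sc: "strongly_convex \<mu> \<omega>"
    and wd: "\<And>y. (\<omega> has_derivative (\<lambda>v. d\<omega> y \<bullet> v)) (at y)"
  shows "\<mu> * (norm (x - y))\<^sup>2 \<le> (d\<omega> x - d\<omega> y) \<bullet> (x - y)"
proof -
  have "(d\<omega> x - d\<omega> y) \<bullet> (x - y) = - (d\<omega> x \<bullet> (y - x)) - d\<omega> y \<bullet> (x - y)"
    by (simp add: inner_diff algebra_simps)
  then show ?thesis
    using strongly_convex_gradient_inequality[OF sc wd, of x y]
      strongly_convex_gradient_inequality[OF sc wd, of y x]
    by (simp add: norm_minus_commute)
qed

lemma strongly_convex_modulus_le_lipschitz: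
  fixes \<omega> :: "'a::euclidean_space \<Rightarrow> real"
  assumes sc: "strongly_convex \<mu> \<omega>"
    and wd: "\<And>y. (\<omega> has_derivative (\<lambda>v. d\<omega> y \<bullet> v)) (at y)"
    and lip: "L-lipschitz_on UNIV d\<omega>"
  shows "\<mu> \<le> L"
proof -
  obtain b :: 'a where b: "b \<in> Basis" using nonempty_Basis by blast
  have "\<mu> * (norm (b - 0))\<^sup>2 \<le> (d\<omega> b - d\<omega> 0) \<bullet> (b - 0)"
    by (rule strongly_convex_gradient_monotone[OF sc wd])
  also have "\<dots> \<le> norm (d\<omega> b - d\<omega> 0) * norm (b - 0)" by (rule norm_cauchy_schwarz)
  also have "\<dots> \<le> L * norm (b - 0) * norm (b - 0)"
    using lipschitz_onD[OF lip, of b 0] by (simp add: dist_norm mult_right_mono)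
  finally show ?thesis using b by simp
qed

text \<open>Baillon--Haddad applied to the convex function \<open>\<omega> - \<mu>/2 |.|\<^sup>2\<close>, whose gradient is
  \<open>(L - \<mu>)\<close>-Lipschitz.\<close>

lemma strongly_convex_gradient_cocoercive:
  fixes \<omega> :: "'a::euclidean_space \<Rightarrow> real"
  assumes sc: "strongly_convex \<mu> \<omega>"
    and wd: "\<And>y. (\<omega> has_derivative (\<lambda>v. d\<omega> y \<bullet> v)) (at y)"
    and lip: "L-lipschitz_on UNIV d\<omega>" and mu: "\<mu> > 0"
  shows "(norm (d\<omega> x - d\<omega> y))\<^sup>2 + \<mu> * L * (norm (x - y))\<^sup>2 \<le> (L + \<mu>) * ((d\<omega> x - d\<omega> y) \<bullet> (x - y))"
proof -
  define D where "D = d\<omega> x - d\<omega> y"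
  define e where "e = x - y"
  have mono: "\<mu> * (norm e)\<^sup>2 \<le> D \<bullet> e"
    unfolding D_def e_def by (rule strongly_convex_gradient_monotone[OF sc wd])
  have lipn: "norm D \<le> L * norm e"
    using lipschitz_onD[OF lip, of x y] by (simp add: D_def e_def dist_norm)
  consider "\<mu> < L" | "L = \<mu>"
    using strongly_convex_modulus_le_lipschitz[OF sc wd lip] by linarith
  then have "(norm D)\<^sup>2 + \<mu> * L * (norm e)\<^sup>2 \<le> (L + \<mu>) * (D \<bullet> e)"
  proof cases
    case 1
    define h where "h = (\<lambda>x. \<omega> x - \<mu> / 2 * (x \<bullet> x))"
    define G where "G = (\<lambda>x. d\<omega> x - \<mu> *\<^sub>R x)"
    note hcv = strongly_convex_shift(1)[OF sc wd, folded h_def]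
    have hd: "(h has_derivative (\<lambda>v. G y \<bullet> v)) (at y)" for y
      using strongly_convex_shift(2)[OF sc wd] by (simp add: h_def G_def)
    have "h z \<le> h w + G w \<bullet> (z - w) + (L - \<mu>) / 2 * (norm (z - w))\<^sup>2" for w z
    proof -
      have nsq: "(norm (z - w))\<^sup>2 = z \<bullet> z - 2 * (w \<bullet> (z - w)) - w \<bullet> w"
        by (simp add: power2_norm_eq_inner inner_diff inner_commute algebra_simps)
      show ?thesis
        using lipschitz_gradient_upper_bound[OF wd lip, where x = w and y = z] unfolding nsq h_def G_def
        by (simp add: inner_diff_left inner_diff_right field_simps)
    qed
    from gradient_cocoercive[OF convex_on_gradient_inequality[OF hcv hd] this, of x y]
    have "(norm (D - \<mu> *\<^sub>R e))\<^sup>2 \<le> (L - \<mu>) * ((D - \<mu> *\<^sub>R e) \<bullet> e)"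
      using 1 by (simp add: G_def D_def e_def algebra_simps)
    then have "(norm D)\<^sup>2 - 2 * \<mu> * (e \<bullet> D) + \<mu>\<^sup>2 * (norm e)\<^sup>2 \<le> (L - \<mu>) * (D \<bullet> e - \<mu> * (norm e)\<^sup>2)"
      unfolding power2_norm_diff_scaleR inner_diff_left inner_scaleR_left power2_norm_eq_inner[symmetric] .
    then show ?thesis
      by (simp add: inner_commute algebra_simps power2_eq_square)
  next
    case 2
    have "(norm D)\<^sup>2 \<le> (L * norm e)\<^sup>2" using lipn by (simp add: power_mono)
    moreover have "\<mu> * (\<mu> * (norm e)\<^sup>2) \<le> \<mu> * (D \<bullet> e)"
      by (rule mult_left_mono[OF mono]) (use mu in simp)
    ultimately show ?thesis
      using 2 by (simp add: power2_eq_square algebra_simps)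
  qed
  then show ?thesis by (simp add: D_def e_def)
qed

lemma gradient_step_contraction:
  fixes \<omega> :: "'a::euclidean_space \<Rightarrow> real"
  assumes sc: "strongly_convex \<mu> \<omega>"
    and wd: "\<And>y. (\<omega> has_derivative (\<lambda>v. d\<omega> y \<bullet> v)) (at y)"
    and lip: "L-lipschitz_on UNIV d\<omega>" and mu: "\<mu> > 0"
    and u: "0 < u" "u \<le> 2 / (L + \<mu>)"
  shows "0 \<le> 1 - 2 * u * \<mu> * L / (L + \<mu>)" and "1 - 2 * u * \<mu> * L / (L + \<mu>) < 1"
    and "norm ((x - u *\<^sub>R d\<omega> x) - (y - u *\<^sub>R d\<omega> y)) \<le> sqrt (1 - 2 * u * \<mu> * L / (L + \<mu>)) * norm (x - y)"
proof -
  define c where "c = 1 - 2 * u * \<mu> * L / (L + \<mu>)"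
  have L: "L > 0" using strongly_convex_modulus_le_lipschitz[OF sc wd lip] mu by linarith
  have "u * u \<le> u * (2 / (L + \<mu>))"
    by (rule mult_left_mono) (use u in auto)
  then have uu: "u * u \<le> 2 * u / (L + \<mu>)" by (simp add: mult.commute)
  have "u * (L + \<mu>) \<le> 2" using u mu L by (simp add: field_simps)
  from mult_right_mono[OF this, of "2 * \<mu> * L"]
  have "2 * u * \<mu> * L * (L + \<mu>) \<le> 4 * \<mu> * L" using mu L by (simp add: algebra_simps)
  also have "4 * \<mu> * L \<le> (L + \<mu>) * (L + \<mu>)"
    using zero_le_power2[of "L - \<mu>"] by (simp add: power2_eq_square algebra_simps)
  finally have "2 * u * \<mu> * L \<le> L + \<mu>"
    by (rule mult_right_le_imp_le) (use mu L in simp)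
  then have "2 * u * \<mu> * L / (L + \<mu>) \<le> 1" using mu L by simp
  then show c0: "0 \<le> 1 - 2 * u * \<mu> * L / (L + \<mu>)" by simp
  show "1 - 2 * u * \<mu> * L / (L + \<mu>) < 1" using u mu L by simp
  define D where "D = d\<omega> x - d\<omega> y"
  define e where "e = x - y"
  have co: "(norm D)\<^sup>2 + \<mu> * L * (norm e)\<^sup>2 \<le> (L + \<mu>) * (D \<bullet> e)"
    unfolding D_def e_def by (rule strongly_convex_gradient_cocoercive[OF sc wd lip mu])
  have "(norm (e - u *\<^sub>R D))\<^sup>2 = (norm e)\<^sup>2 - 2 * u * (D \<bullet> e) + u\<^sup>2 * (norm D)\<^sup>2"
    by (rule power2_norm_diff_scaleR)
  also have "\<dots> \<le> (norm e)\<^sup>2 - 2 * u / (L + \<mu>) * ((norm D)\<^sup>2 + \<mu> * L * (norm e)\<^sup>2) + u\<^sup>2 * (norm D)\<^sup>2"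
    using mult_left_mono[OF co, of "2 * u / (L + \<mu>)"] u mu L by simp
  also have "\<dots> \<le> c * (norm e)\<^sup>2"
    using mult_right_mono[OF uu, of "(norm D)\<^sup>2"] by (simp add: c_def power2_eq_square algebra_simps)
  finally have "(norm (e - u *\<^sub>R D))\<^sup>2 \<le> (sqrt c * norm e)\<^sup>2"
    using c0 by (simp add: c_def power_mult_distrib)
  then have "norm (e - u *\<^sub>R D) \<le> sqrt c * norm e"
    using c0 by (simp add: c_def power2_le_iff_abs_le)
  moreover have "(x - u *\<^sub>R d\<omega> x) - (y - u *\<^sub>R d\<omega> y) = e - u *\<^sub>R D"
    by (simp add: D_def e_def algebra_simps)
  ultimately show "norm ((x - u *\<^sub>R d\<omega> x) - (y - u *\<^sub>R d\<omega> y)) \<le> sqrt c * norm (x - y)"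
    by (simp only: e_def)
qed

section \<open>Proximal operators\<close>

definition lower_semicontinuous :: "('a::topological_space \<Rightarrow> ereal) \<Rightarrow> bool" where
  "lower_semicontinuous F \<longleftrightarrow> (\<forall>v b. b < F v \<longrightarrow> eventually (\<lambda>w. b < F w) (nhds v))"

lemma lsc_fun_imp_lower_semicontinuous:
  assumes "lsc_fun g"
  shows "lower_semicontinuous g"
  unfolding lower_semicontinuous_def
proof (intro allI impI)
  fix v b assume b: "b < g v"
  with assms have "eventually (\<lambda>w. b < g w) (at v)"
    unfolding lsc_fun_def using le_Liminf_iff by blast
  with b show "eventually (\<lambda>w. b < g w) (nhds v)"
    by (simp add: eventually_nhds_conv_at)
qed

lemma lower_semicontinuous_attains_min:
  assumes F: "lower_semicontinuous F" and K: "compact K" "K \<noteq> {}"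
  shows "\<exists>p\<in>K. \<forall>v\<in>K. F p \<le> F v"
proof (rule ccontr)
  assume "\<not> ?thesis"
  then have "\<forall>p\<in>K. \<exists>v\<in>K. F v < F p" by (auto simp: not_le)
  then obtain V where V: "\<And>p. p \<in> K \<Longrightarrow> V p \<in> K \<and> F (V p) < F p" by metis
  have "\<exists>U. open U \<and> p \<in> U \<and> (\<forall>w\<in>U. F (V p) < F w)" if "p \<in> K" for p
    using F V[OF that] unfolding lower_semicontinuous_def eventually_nhds by blast
  then obtain U where U: "\<And>p. p \<in> K \<Longrightarrow> open (U p) \<and> p \<in> U p \<and> (\<forall>w\<in>U p. F (V p) < F w)"
    by metis
  obtain C where C: "C \<subseteq> K" "finite C" "K \<subseteq> (\<Union>c\<in>C. U c)"
    by (rule compactE_image[OF K(1), of K U]) (use U in auto)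
  with K(2) have "C \<noteq> {}" by auto
  \<comment> \<open>the smallest of the finitely many values \<open>F (V c)\<close> is beaten inside the \<open>U c\<close> covering \<open>V c\<close>\<close>
  define m where "m = Min ((\<lambda>c. F (V c)) ` C)"
  have "m \<in> (\<lambda>c. F (V c)) ` C" unfolding m_def by (rule Min_in) (use C \<open>C \<noteq> {}\<close> in auto)
  then obtain q where q: "q \<in> C" "m = F (V q)" by auto
  then have "V q \<in> K" using V C by auto
  then obtain p where p: "p \<in> C" "V q \<in> U p" using C(3) by auto
  then have "F (V p) < F (V q)" using U[of p] C by auto
  moreover have "m \<le> F (V p)" unfolding m_def by (rule Min_le) (use C p in auto)
  ultimately show False using q by simp
qed

lemma lower_semicontinuous_add_continuous:
  fixes F :: "'a::metric_space \<Rightarrow> ereal"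
  assumes F: "lower_semicontinuous F" and nm: "\<And>v. F v \<noteq> -\<infinity>" and q: "continuous_on UNIV q"
  shows "lower_semicontinuous (\<lambda>v. F v + ereal (q v))"
  unfolding lower_semicontinuous_def
proof (intro allI impI)
  fix v and b :: ereal assume b: "b < F v + ereal (q v)"
  show "eventually (\<lambda>w. b < F w + ereal (q w)) (nhds v)"
  proof (cases b)
    case MInf
    have "-\<infinity> < F w + ereal (q w)" for w using nm[of w] by (cases "F w") auto
    then show ?thesis using MInf by (auto intro!: always_eventually)
  next
    case PInf then show ?thesis using b by simp
  next
    case (real r)
    then have "ereal (r - q v) < F v" using b by (cases "F v") auto
    then obtain r' where "ereal (r - q v) < ereal r'" and r': "ereal r' < F v"
      using ereal_dense2 by blast
    then have "r - r' < q v" by simp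
    have "(q \<longlongrightarrow> q v) (at v)"
      using q by (simp add: continuous_on_eq_continuous_at isCont_def)
    then have "eventually (\<lambda>w. r - r' < q w) (nhds v)"
      using \<open>r - r' < q v\<close> by (simp add: order_tendstoD(1) eventually_nhds_conv_at)
    moreover have "eventually (\<lambda>w. ereal r' < F w) (nhds v)"
      using F r' unfolding lower_semicontinuous_def by blast
    ultimately show ?thesis
    proof eventually_elim
      case (elim w)
      then show ?case using real by (cases "F w") auto
    qed
  qed
qed

lemma lower_semicontinuous_scale:
  assumes F: "lower_semicontinuous g" and nm: "\<And>v. g v \<noteq> -\<infinity>" and c: "c > 0"
  shows "lower_semicontinuous (\<lambda>v. ereal c * g v)"
  unfolding lower_semicontinuous_def
proof (intro allI impI)
  fix v and b :: ereal assume b: "b < ereal c * g v"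
  show "eventually (\<lambda>w. b < ereal c * g w) (nhds v)"
  proof (cases b)
    case MInf
    have "-\<infinity> < ereal c * g w" for w using nm[of w] c by (cases "g w") auto
    then show ?thesis using MInf by (auto intro!: always_eventually)
  next
    case PInf then show ?thesis using b by simp
  next
    case (real r)
    have "ereal (r / c) < g v" using b real c by (cases "g v") (auto simp: field_simps)
    then have "eventually (\<lambda>w. ereal (r / c) < g w) (nhds v)"
      using F unfolding lower_semicontinuous_def by blast
    then show ?thesis
    proof eventually_elim
      case (elim w)
      then show ?case using real c by (cases "g w") (auto simp: field_simps)
    qed
  qed
qed

lemma proper_fun_not_MInf: "proper_fun g \<Longrightarrow> g v \<noteq> -\<infinity>"
  unfolding proper_fun_def by blast

lemma proper_funE:
  assumes "proper_fun g"
  obtains x0 a0 where "g x0 = ereal a0"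
  using assms unfolding proper_fun_def by (metis ereal_cases)

lemma convex_ereal_fun_finite:
  assumes cv: "convex_ereal_fun g" and gx: "g x = ereal a" and gy: "g y = ereal b"
    and l: "0 \<le> l" "l \<le> 1" and nm: "\<And>v. g v \<noteq> -\<infinity>"
  obtains w where "g ((1 - l) *\<^sub>R x + l *\<^sub>R y) = ereal w" and "w \<le> (1 - l) * a + l * b"
proof -
  have "g ((1 - l) *\<^sub>R x + l *\<^sub>R y) \<le> ereal ((1 - l) * a + l * b)"
    using cv l unfolding convex_ereal_fun_def by (metis gx gy times_ereal.simps(1) plus_ereal.simps(1))
  with nm[of "(1 - l) *\<^sub>R x + l *\<^sub>R y"] that show ?thesis
    by (cases "g ((1 - l) *\<^sub>R x + l *\<^sub>R y)") auto
qed

lemma le_of_le_add_scaled: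
  fixes a b e :: real
  assumes h: "\<And>l. 0 < l \<Longrightarrow> l < 1 \<Longrightarrow> a \<le> b + l * e" and e: "e \<ge> 0"
  shows "a \<le> b"
proof (rule field_le_epsilon)
  fix \<epsilon> :: real assume \<epsilon>: "0 < \<epsilon>"
  define l where "l = min (1 / 2) (\<epsilon> / (e + 1))"
  have l: "0 < l" "l < 1" using \<epsilon> e by (auto simp: l_def)
  have "l * e \<le> \<epsilon> / (e + 1) * e" using e by (intro mult_right_mono) (auto simp: l_def)
  also have "\<dots> \<le> \<epsilon>" using \<epsilon> e by (simp add: field_simps)
  finally show "a \<le> b + \<epsilon>" using h[OF l] by simp
qed

text \<open>Lower semicontinuity bounds \<open>g\<close> below on the unit ball around a finite point; convexity
  propagates this bound outwards with linear decay.\<close>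

lemma proper_convex_lsc_linear_minorant:
  fixes g :: "'a::euclidean_space \<Rightarrow> ereal"
  assumes pr: "proper_fun g" and ls: "lsc_fun g" and cv: "convex_ereal_fun g"
  obtains A B where "\<And>v. ereal (A - B * norm v) \<le> g v" and "B \<ge> 0"
proof -
  note nm = proper_fun_not_MInf[OF pr]
  obtain x0 a0 where a0: "g x0 = ereal a0" using pr by (rule proper_funE)
  obtain p1 where p1: "\<forall>v\<in>cball x0 1. g p1 \<le> g v"
    using lower_semicontinuous_attains_min[OF lsc_fun_imp_lower_semicontinuous[OF ls], of "cball x0 1"]
    by auto
  then have "g p1 \<le> g x0" by simp
  then obtain b1 where b1: "g p1 = ereal b1" "b1 \<le> a0"
    using nm[of p1] a0 by (cases "g p1") auto
  define K where "K = a0 - b1"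
  have K0: "K \<ge> 0" using b1 by (simp add: K_def)
  have bound: "ereal (a0 - K * norm (v - x0)) \<le> g v" if v: "norm (v - x0) > 1" for v
  proof (cases "g v")
    case (real gv)
    define R where "R = norm (v - x0)"
    define w where "w = (1 - 1 / R) *\<^sub>R x0 + (1 / R) *\<^sub>R v"
    have R: "R > 1" using v by (simp add: R_def)
    have "w - x0 = (1 / R) *\<^sub>R (v - x0)" by (simp add: w_def algebra_simps)
    then have "w \<in> cball x0 1" using R by (simp add: dist_norm norm_minus_commute R_def)
    then have "g p1 \<le> g w" using p1 by simp
    moreover obtain gw where "g w = ereal gw" "gw \<le> (1 - 1 / R) * a0 + (1 / R) * gv"
      using convex_ereal_fun_finite[OF cv a0 real _ _ nm, of "1 / R"] R unfolding w_def by auto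
    ultimately have "R * b1 \<le> R * ((1 - 1 / R) * a0 + (1 / R) * gv)"
      using b1 R by (simp add: mult_left_mono)
    also have "\<dots> = (R - 1) * a0 + gv" using R by (simp add: field_simps)
    finally show ?thesis using real by (simp add: K_def R_def algebra_simps)
  qed (use nm in auto)
  show ?thesis
  proof (rule that)
    fix v
    have "K * norm (v - x0) \<le> K * (norm v + norm x0)"
      using norm_triangle_ineq4[of v x0] K0 by (rule mult_left_mono)
    then have "ereal (a0 - K * (1 + norm x0) - K * norm v) \<le> ereal (a0 - K * norm (v - x0))"
      using K0 by (simp add: algebra_simps)
    have "ereal (a0 - K * (1 + norm x0) - K * norm v) \<le> ereal b1"
      using K0 by (simp add: K_def algebra_simps add_mono mult_right_mono)
    show "ereal (a0 - K * (1 + norm x0) - K * norm v) \<le> g v"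
    proof (cases "norm (v - x0) \<le> 1")
      case True
      then have "g p1 \<le> g v" using p1 by (simp add: dist_norm norm_minus_commute)
      moreover have "ereal (a0 - K * (1 + norm x0) - K * norm v) \<le> g p1"
        using \<open>ereal (a0 - K * (1 + norm x0) - K * norm v) \<le> ereal b1\<close> b1 by simp
      ultimately show ?thesis by (rule order_trans[rotated])
    next
      case False
      then have "ereal (a0 - K * norm (v - x0)) \<le> g v" by (intro bound) simp
      with \<open>ereal (a0 - K * (1 + norm x0) - K * norm v) \<le> ereal (a0 - K * norm (v - x0))\<close>
      show ?thesis by (rule order_trans)
    qed
  qed (rule K0)
qed

definition prox_objective :: "real \<Rightarrow> ('a::real_normed_vector \<Rightarrow> ereal) \<Rightarrow> 'a \<Rightarrow> 'a \<Rightarrow> ereal" where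
  "prox_objective c g z v = ereal c * g v + ereal ((norm (v - z))\<^sup>2 / 2)"

lemma prox_objective_finite: "g v = ereal gv \<Longrightarrow> prox_objective c g z v = ereal (c * gv + (norm (v - z))\<^sup>2 / 2)"
  by (simp add: prox_objective_def)

lemma prox_objective_attains_min:
  fixes g :: "'a::euclidean_space \<Rightarrow> ereal"
  assumes pr: "proper_fun g" and ls: "lsc_fun g" and cv: "convex_ereal_fun g" and c: "c > 0"
  obtains p where "\<And>v. prox_objective c g z p \<le> prox_objective c g z v"
proof -
  note nm = proper_fun_not_MInf[OF pr]
  obtain A B where AB: "\<And>v. ereal (A - B * norm v) \<le> g v" and B: "B \<ge> 0"
    using proper_convex_lsc_linear_minorant[OF pr ls cv] by metis
  have "lower_semicontinuous (prox_objective c g z)"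
    unfolding prox_objective_def[abs_def] using nm c
    by (intro lower_semicontinuous_add_continuous lower_semicontinuous_scale
        lsc_fun_imp_lower_semicontinuous ls continuous_intros)
      (auto elim!: ereal_cases[of "g _"])
  obtain x0 a0 where a0: "g x0 = ereal a0" using pr by (rule proper_funE)
  define M0 where "M0 = c * a0 + (norm (x0 - z))\<^sup>2 / 2"
  have PF0: "prox_objective c g z x0 = ereal M0" using a0 by (simp add: prox_objective_finite M0_def)
  have lb: "ereal (c * (A - B * norm v) + (norm (v - z))\<^sup>2 / 2) \<le> prox_objective c g z v" for v
  proof (cases "g v")
    case (real gv)
    then have "c * (A - B * norm v) \<le> c * gv" using AB[of v] c by (simp add: mult_left_mono)
    then show ?thesis using real by (simp add: prox_objective_finite)
  qed (use nm c in \<open>auto simp: prox_objective_def\<close>)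
  \<comment> \<open>outside a large ball the quadratic term beats both the linear minorant and the value at \<open>x0\<close>\<close>
  define R0 where "R0 = max (2 * norm z) (8 * c * B + 8 * \<bar>M0 - c * A\<bar> + 1)"
  have far: "ereal M0 < prox_objective c g z v" if v: "norm v > R0" for v
  proof -
    define n where "n = norm v"
    have n1: "n > 8 * c * B + 8 * \<bar>M0 - c * A\<bar> + 1" and n2: "n \<ge> 2 * norm z"
      using v by (auto simp: n_def R0_def)
    have n0: "n \<ge> 1" using n1 c B by (smt (verit) mult_nonneg_nonneg abs_ge_zero)
    have "norm (v - z) \<ge> n / 2" using norm_triangle_ineq2[of v z] n2 by (simp add: n_def)
    then have "(norm (v - z))\<^sup>2 \<ge> (n / 2)\<^sup>2" using n0 by (intro power_mono) auto
    then have sq: "(norm (v - z))\<^sup>2 / 2 \<ge> n * n / 8" by (simp add: power2_eq_square)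
    have "n * n > n * (8 * c * B + 8 * \<bar>M0 - c * A\<bar> + 1)" using n1 n0 by (intro mult_strict_left_mono) auto
    moreover have "n * \<bar>M0 - c * A\<bar> \<ge> \<bar>M0 - c * A\<bar>" using n0 by (simp add: mult_le_cancel_right1)
    ultimately have "M0 < c * (A - B * n) + (norm (v - z))\<^sup>2 / 2"
      using sq n0 by (simp add: algebra_simps)
    then have "ereal M0 < ereal (c * (A - B * norm v) + (norm (v - z))\<^sup>2 / 2)"
      by (simp add: n_def)
    then show ?thesis using lb[of v] by (rule less_le_trans)
  qed
  have "cball 0 R0 \<noteq> {}" by (simp add: R0_def)
  then obtain p where p: "\<forall>v\<in>cball 0 R0. prox_objective c g z p \<le> prox_objective c g z v"
    using lower_semicontinuous_attains_min[OF \<open>lower_semicontinuous _\<close> compact_cball] by blast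
  have "x0 \<in> cball 0 R0"
  proof (rule ccontr)
    assume "x0 \<notin> cball 0 R0"
    then have "ereal M0 < prox_objective c g z x0" by (intro far) simp
    with PF0 show False by simp
  qed
  with p PF0 have "prox_objective c g z p \<le> ereal M0" by metis
  have "prox_objective c g z p \<le> prox_objective c g z v" for v
  proof (cases "v \<in> cball 0 R0")
    case False
    then have "ereal M0 < prox_objective c g z v" by (intro far) simp
    with \<open>prox_objective c g z p \<le> ereal M0\<close> show ?thesis by simp
  qed (use p in blast)
  then show ?thesis by (rule that)
qed

text \<open>The variational characterisation \<open>z - p \<in> c \<partial>g(p)\<close> of the proximal point.\<close>

definition is_prox_point :: "real \<Rightarrow> ('a::real_inner \<Rightarrow> ereal) \<Rightarrow> 'a \<Rightarrow> 'a \<Rightarrow> bool" where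
  "is_prox_point c g z p \<longleftrightarrow>
     (\<exists>gp. g p = ereal gp \<and> (\<forall>v gv. g v = ereal gv \<longrightarrow> (z - p) \<bullet> (v - p) \<le> c * (gv - gp)))"

lemma prox_objective_min_iff_is_prox_point:
  fixes g :: "'a::real_inner \<Rightarrow> ereal"
  assumes pr: "proper_fun g" and cv: "convex_ereal_fun g" and c: "c > 0"
  shows "(\<forall>v. prox_objective c g z p \<le> prox_objective c g z v) \<longleftrightarrow> is_prox_point c g z p"
proof
  note nm = proper_fun_not_MInf[OF pr]
  assume mn: "\<forall>v. prox_objective c g z p \<le> prox_objective c g z v"
  obtain x0 a0 where a0: "g x0 = ereal a0" using pr by (rule proper_funE)
  have "g p \<noteq> \<infinity>"
    using mn[rule_format, of x0] a0 c by (auto simp: prox_objective_def)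
  then obtain gp where gp: "g p = ereal gp" using nm[of p] by (cases "g p") auto
  have "(z - p) \<bullet> (v - p) \<le> c * (gv - gp)" if gv: "g v = ereal gv" for v gv
  proof (rule le_of_le_add_scaled)
    fix l :: real assume l: "0 < l" "l < 1"
    define w where "w = (1 - l) *\<^sub>R p + l *\<^sub>R v"
    obtain gw where gw: "g w = ereal gw" "gw \<le> (1 - l) * gp + l * gv"
      using convex_ereal_fun_finite[OF cv gp gv _ _ nm, of l] l unfolding w_def by auto
    have "c * gp + (norm (p - z))\<^sup>2 / 2 \<le> c * gw + (norm (w - z))\<^sup>2 / 2"
      using mn gp gw by (metis prox_objective_finite ereal_less_eq(3))
    moreover have "w - z = (p - z) - (- l) *\<^sub>R (v - p)" by (simp add: w_def algebra_simps)
    then have "(norm (w - z))\<^sup>2 = (norm (p - z))\<^sup>2 - 2 * (- l) * ((v - p) \<bullet> (p - z)) + (- l)\<^sup>2 * (norm (v - p))\<^sup>2"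
      by (simp only: power2_norm_diff_scaleR)
    moreover have "2 * (- l) * ((v - p) \<bullet> (p - z)) = 2 * (l * ((z - p) \<bullet> (v - p)))"
      by (simp add: inner_commute inner_diff_left inner_diff_right algebra_simps)
    moreover have "c * gw \<le> c * gp - l * (c * gp) + l * (c * gv)"
      using gw c mult_left_mono[OF gw(2), of c] by (simp add: algebra_simps)
    moreover have "l * (c * (gv - gp) + l * ((norm (v - p))\<^sup>2 / 2))
        = l * (c * gv) - l * (c * gp) + (- l)\<^sup>2 * (norm (v - p))\<^sup>2 / 2"
      by (simp add: algebra_simps power2_eq_square)
    ultimately have "l * ((z - p) \<bullet> (v - p)) \<le> l * (c * (gv - gp) + l * ((norm (v - p))\<^sup>2 / 2))"
      by linarith
    then show "(z - p) \<bullet> (v - p) \<le> c * (gv - gp) + l * ((norm (v - p))\<^sup>2 / 2)"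
      using l by simp
  qed simp
  with gp show "is_prox_point c g z p" unfolding is_prox_point_def by blast
next
  assume "is_prox_point c g z p"
  then obtain gp where gp: "g p = ereal gp"
    and h: "\<And>v gv. g v = ereal gv \<Longrightarrow> (z - p) \<bullet> (v - p) \<le> c * (gv - gp)"
    unfolding is_prox_point_def by blast
  show "\<forall>v. prox_objective c g z p \<le> prox_objective c g z v"
  proof
    fix v
    show "prox_objective c g z p \<le> prox_objective c g z v"
    proof (cases "g v")
      case (real gv)
      have "(norm (v - z))\<^sup>2 = (norm (p - z))\<^sup>2 + 2 * ((v - p) \<bullet> (p - z)) + (norm (v - p))\<^sup>2"
        using power2_norm_diff_scaleR[of "p - z" "- 1" "v - p"] by simp
      moreover have "(v - p) \<bullet> (p - z) = - ((z - p) \<bullet> (v - p))"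
        by (simp add: inner_commute inner_diff_left inner_diff_right)
      moreover have "c * (gv - gp) = c * gv - c * gp" by (simp add: algebra_simps)
      ultimately have "c * gp + (norm (p - z))\<^sup>2 / 2 \<le> c * gv + (norm (v - z))\<^sup>2 / 2"
        using h[OF real] zero_le_power2[of "norm (v - p)"] by linarith
      then show ?thesis using gp real by (simp add: prox_objective_finite)
    qed (use c proper_fun_not_MInf[OF pr] in \<open>auto simp: prox_objective_def\<close>)
  qed
qed

lemma is_prox_point_unique:
  assumes "is_prox_point c g z p" "is_prox_point c g z q"
  shows "p = q"
proof -
  obtain gp gq where "g p = ereal gp" "g q = ereal gq"
    and "(z - p) \<bullet> (q - p) \<le> c * (gq - gp)" "(z - q) \<bullet> (p - q) \<le> c * (gp - gq)"
    using assms unfolding is_prox_point_def by blast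
  then have "(z - p) \<bullet> (q - p) + (z - q) \<bullet> (p - q) \<le> 0" by (simp add: algebra_simps)
  moreover have "(z - p) \<bullet> (q - p) + (z - q) \<bullet> (p - q) = (q - p) \<bullet> (q - p)"
    by (simp add: inner_diff_left inner_diff_right inner_commute algebra_simps)
  ultimately show ?thesis by (metis antisym inner_ge_zero inner_eq_zero_iff eq_iff_diff_eq_0)
qed

lemma prox_eq_iff_is_prox_point:
  fixes g :: "'a::euclidean_space \<Rightarrow> ereal"
  assumes pr: "proper_fun g" and ls: "lsc_fun g" and cv: "convex_ereal_fun g" and c: "c > 0"
  shows "prox (\<lambda>v. ereal c * g v) z = p \<longleftrightarrow> is_prox_point c g z p"
proof -
  have min_iff: "(\<forall>v. prox_objective c g z q \<le> prox_objective c g z v) \<longleftrightarrow> is_prox_point c g z q" for q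
    by (rule prox_objective_min_iff_is_prox_point[OF pr cv c])
  obtain q where "\<And>v. prox_objective c g z q \<le> prox_objective c g z v"
    using prox_objective_attains_min[OF pr ls cv c, where z = z] by metis
  then have q: "is_prox_point c g z q" using min_iff by blast
  have "prox (\<lambda>v. ereal c * g v) z = q"
    unfolding prox_def
  proof (rule the_equality)
    show "\<forall>v. ereal c * g q + ereal ((norm (q - z))\<^sup>2 / 2) \<le> ereal c * g v + ereal ((norm (v - z))\<^sup>2 / 2)"
      using min_iff q unfolding prox_objective_def by blast
  next
    fix q' assume "\<forall>v. ereal c * g q' + ereal ((norm (q' - z))\<^sup>2 / 2) \<le> ereal c * g v + ereal ((norm (v - z))\<^sup>2 / 2)"
    then show "q' = q" using min_iff q is_prox_point_unique unfolding prox_objective_def by blast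
  qed
  then show ?thesis using q is_prox_point_unique by blast
qed

lemma prox_nonexpansive:
  fixes g :: "'a::euclidean_space \<Rightarrow> ereal"
  assumes pr: "proper_fun g" and ls: "lsc_fun g" and cv: "convex_ereal_fun g" and c: "c > 0"
  shows "norm (prox (\<lambda>v. ereal c * g v) z1 - prox (\<lambda>v. ereal c * g v) z2) \<le> norm (z1 - z2)"
proof -
  define p1 where "p1 = prox (\<lambda>v. ereal c * g v) z1"
  define p2 where "p2 = prox (\<lambda>v. ereal c * g v) z2"
  obtain gp1 gp2 where "g p1 = ereal gp1" "g p2 = ereal gp2"
    and "(z1 - p1) \<bullet> (p2 - p1) \<le> c * (gp2 - gp1)" "(z2 - p2) \<bullet> (p1 - p2) \<le> c * (gp1 - gp2)"
    using prox_eq_iff_is_prox_point[OF pr ls cv c] unfolding p1_def p2_def is_prox_point_def by metis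
  then have "(z1 - p1) \<bullet> (p2 - p1) + (z2 - p2) \<bullet> (p1 - p2) \<le> 0" by (simp add: algebra_simps)
  moreover have "(z1 - p1) \<bullet> (p2 - p1) + (z2 - p2) \<bullet> (p1 - p2) = (norm (p1 - p2))\<^sup>2 - (z1 - z2) \<bullet> (p1 - p2)"
    by (simp add: power2_norm_eq_inner inner_diff_left inner_diff_right inner_commute algebra_simps)
  ultimately have "(norm (p1 - p2))\<^sup>2 \<le> norm (z1 - z2) * norm (p1 - p2)"
    using norm_cauchy_schwarz[of "z1 - z2" "p1 - p2"] by linarith
  then show ?thesis unfolding p1_def[symmetric] p2_def[symmetric]
    by (cases "norm (p1 - p2) = 0") (auto simp: power2_eq_square mult_le_cancel_right)
qed

section \<open>Forward--backward steps\<close>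

lemma forward_backward_nonexpansive:
  fixes f :: "'a::euclidean_space \<Rightarrow> real"
  assumes cv: "convex_on UNIV f"
    and fd: "\<And>y. (f has_derivative (\<lambda>v. df y \<bullet> v)) (at y)"
    and lip: "M-lipschitz_on UNIV df" and M: "M > 0" and t: "0 < t" "t \<le> 1 / M"
    and pr: "proper_fun g" and ls: "lsc_fun g" and gc: "convex_ereal_fun g"
  shows "norm (prox (\<lambda>v. ereal t * g v) (x - t *\<^sub>R df x) - prox (\<lambda>v. ereal t * g v) (y - t *\<^sub>R df y))
    \<le> norm (x - y)"
  using prox_nonexpansive[OF pr ls gc t(1), of "x - t *\<^sub>R df x" "y - t *\<^sub>R df y"]
    gradient_step_nonexpansive[OF cv fd lip M t, of x y] by linarith

lemma argmin_on_sum_finite: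
  assumes pr: "proper_fun g" and x: "x \<in> argmin_on (\<lambda>y. ereal (f y) + g y) UNIV"
  obtains gx where "g x = ereal gx" and "\<And>v. ereal (f x + gx) \<le> ereal (f v) + g v"
proof -
  obtain x0 a0 where "g x0 = ereal a0" using pr by (rule proper_funE)
  with x have "g x \<noteq> \<infinity>" unfolding argmin_on_def by force
  then obtain gx where gx: "g x = ereal gx" using proper_fun_not_MInf[OF pr, of x] by (cases "g x") auto
  moreover have "ereal (f x + gx) \<le> ereal (f v) + g v" for v
    using x gx unfolding argmin_on_def by auto
  ultimately show ?thesis by (rule that)
qed

text \<open>Fixed points of the forward--backward step are exactly the minimisers of \<open>f + g\<close>: both say
  \<open>- df x \<in> \<partial>g(x)\<close>. For the converse direction, \<open>f\<close> is compared along the segment from \<open>x\<close> to \<open>v\<close>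
  by the descent lemma, whose quadratic error vanishes to first order.\<close>

lemma forward_backward_fixpoint_iff_argmin:
  fixes f :: "'a::euclidean_space \<Rightarrow> real"
  assumes cv: "convex_on UNIV f"
    and fd: "\<And>y. (f has_derivative (\<lambda>v. df y \<bullet> v)) (at y)"
    and lip: "M-lipschitz_on UNIV df" and s: "0 < s"
    and pr: "proper_fun g" and ls: "lsc_fun g" and gc: "convex_ereal_fun g"
  shows "prox (\<lambda>v. ereal s * g v) (x - s *\<^sub>R df x) = x \<longleftrightarrow> x \<in> argmin_on (\<lambda>y. ereal (f y) + g y) UNIV"
  unfolding prox_eq_iff_is_prox_point[OF pr ls gc s]
proof
  assume "is_prox_point s g (x - s *\<^sub>R df x) x"
  then obtain gx where gx: "g x = ereal gx"
    and h: "\<And>v gv. g v = ereal gv \<Longrightarrow> - s * (df x \<bullet> (v - x)) \<le> s * (gv - gx)"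
    unfolding is_prox_point_def by auto
  have "ereal (f x) + g x \<le> ereal (f v) + g v" for v
  proof (cases "g v")
    case (real gv)
    with h s have "- (df x \<bullet> (v - x)) \<le> gv - gx"
      by (metis mult_le_cancel_left_pos mult_minus_left mult_minus_right)
    with convex_on_gradient_inequality[OF cv fd, of x v] gx real show ?thesis by simp
  qed (use proper_fun_not_MInf[OF pr] in auto)
  then show "x \<in> argmin_on (\<lambda>y. ereal (f y) + g y) UNIV" unfolding argmin_on_def by blast
next
  assume "x \<in> argmin_on (\<lambda>y. ereal (f y) + g y) UNIV"
  then obtain gx where gx: "g x = ereal gx" and mn: "\<And>v. ereal (f x + gx) \<le> ereal (f v) + g v"
    using argmin_on_sum_finite[OF pr] by metis
  have "(x - s *\<^sub>R df x - x) \<bullet> (v - x) \<le> s * (gv - gx)" if gv: "g v = ereal gv" for v gv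
  proof -
    have "gx - gv \<le> df x \<bullet> (v - x)"
    proof (rule le_of_le_add_scaled)
      fix l :: real assume l: "0 < l" "l < 1"
      define w where "w = (1 - l) *\<^sub>R x + l *\<^sub>R v"
      obtain gw where gw: "g w = ereal gw" "gw \<le> (1 - l) * gx + l * gv"
        using convex_ereal_fun_finite[OF gc gx gv _ _ proper_fun_not_MInf[OF pr], of l] l
        unfolding w_def by auto
      have "f x + gx \<le> f w + gw" using mn[of w] gw by simp
      moreover have "f w \<le> f x + df x \<bullet> (w - x) + M / 2 * (norm (w - x))\<^sup>2"
        by (rule lipschitz_gradient_upper_bound[OF fd lip])
      moreover have "w - x = l *\<^sub>R (v - x)" by (simp add: w_def algebra_simps)
      then have "df x \<bullet> (w - x) + M / 2 * (norm (w - x))\<^sup>2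
          = l * (df x \<bullet> (v - x)) + l * (l * (M / 2 * (norm (v - x))\<^sup>2))"
        using l by (simp add: power_mult_distrib power2_eq_square)
      ultimately have "l * (gx - gv) \<le> l * (df x \<bullet> (v - x) + l * (M / 2 * (norm (v - x))\<^sup>2))"
        using gw(2) by (simp add: algebra_simps)
      then show "gx - gv \<le> df x \<bullet> (v - x) + l * (M / 2 * (norm (v - x))\<^sup>2)" using l by simp
    qed (use lipschitz_on_nonneg[OF lip] in simp)
    then show ?thesis using s mult_left_mono[of "gx - gv" "df x \<bullet> (v - x)" s] by (simp add: algebra_simps)
  qed
  with gx show "is_prox_point s g (x - s *\<^sub>R df x) x" unfolding is_prox_point_def by blast
qed

lemma convex_argmin_on_sum:
  fixes f :: "'a::euclidean_space \<Rightarrow> real"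
  assumes cv: "convex_on UNIV f" and pr: "proper_fun g" and gc: "convex_ereal_fun g"
  shows "convex (argmin_on (\<lambda>y. ereal (f y) + g y) UNIV)"
proof (rule convexI)
  fix x y :: 'a and a b :: real
  assume x: "x \<in> argmin_on (\<lambda>y. ereal (f y) + g y) UNIV" and y: "y \<in> argmin_on (\<lambda>y. ereal (f y) + g y) UNIV"
    and ab: "0 \<le> a" "0 \<le> b" "a + b = 1"
  then have a: "a = 1 - b" by simp
  obtain gx where gx: "g x = ereal gx" and mx: "\<And>v. ereal (f x + gx) \<le> ereal (f v) + g v"
    using argmin_on_sum_finite[OF pr x] by metis
  obtain gy where gy: "g y = ereal gy" and my: "\<And>v. ereal (f y + gy) \<le> ereal (f v) + g v"
    using argmin_on_sum_finite[OF pr y] by metis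
  obtain gw where gw: "g (a *\<^sub>R x + b *\<^sub>R y) = ereal gw" "gw \<le> (1 - b) * gx + b * gy"
    using convex_ereal_fun_finite[OF gc gx gy _ _ proper_fun_not_MInf[OF pr], of b] ab
    unfolding a by auto
  have "f (a *\<^sub>R x + b *\<^sub>R y) \<le> f x - b * f x + b * f y"
    using convex_onD[OF cv, of b x y] ab unfolding a by (simp add: algebra_simps)
  moreover have "b * f y + b * gy = b * f x + b * gx"
    using mx[of y] my[of x] gx gy by (simp flip: distrib_left)
  moreover have "gw \<le> gx - b * gx + b * gy" using gw(2) by (simp add: algebra_simps)
  ultimately have "ereal (f (a *\<^sub>R x + b *\<^sub>R y)) + g (a *\<^sub>R x + b *\<^sub>R y) \<le> ereal (f x + gx)"
    using gw(1) by simp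
  then have "ereal (f (a *\<^sub>R x + b *\<^sub>R y)) + g (a *\<^sub>R x + b *\<^sub>R y) \<le> ereal (f v) + g v" for v
    using mx[of v] by (rule order_trans)
  then show "a *\<^sub>R x + b *\<^sub>R y \<in> argmin_on (\<lambda>y. ereal (f y) + g y) UNIV"
    unfolding argmin_on_def by blast
qed

section \<open>Xu's lemma\<close>

lemma not_summable_nonneg_sums_unbounded:
  fixes \<gamma> :: "nat \<Rightarrow> real"
  assumes "\<not> summable \<gamma>" and "\<And>k. 0 \<le> \<gamma> k"
  obtains m where "sum \<gamma> {..<m} > M"
proof -
  have "\<not> (\<forall>m. sum \<gamma> {..<m} \<le> M)"
    using assms summableI_nonneg_bounded[of \<gamma> M] by blast
  with that show ?thesis by (auto simp: not_le)
qed

lemma xu_recursion_tendsto_zero: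
  fixes s \<gamma> \<delta> :: "nat \<Rightarrow> real"
  assumes s0: "\<And>k. s k \<ge> 0" and g: "\<And>k. 0 < \<gamma> k \<and> \<gamma> k \<le> 1" and ns: "\<not> summable \<gamma>"
    and rec: "eventually (\<lambda>k. s (Suc k) \<le> (1 - \<gamma> k) * s k + \<gamma> k * \<delta> k) sequentially"
    and dl: "\<And>\<epsilon>. \<epsilon> > 0 \<Longrightarrow> eventually (\<lambda>k. \<delta> k \<le> \<epsilon>) sequentially"
  shows "s \<longlonglongrightarrow> 0"
proof (rule LIMSEQ_I)
  fix \<epsilon> :: real assume "\<epsilon> > 0"
  define e where "e = \<epsilon> / 2"
  have e0: "e > 0" using \<open>\<epsilon> > 0\<close> by (simp add: e_def)
  obtain N where N: "\<And>k. k \<ge> N \<Longrightarrow> s (Suc k) \<le> (1 - \<gamma> k) * s k + \<gamma> k * \<delta> k \<and> \<delta> k \<le> e"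
    using eventually_conj[OF rec dl[OF e0]] unfolding eventually_sequentially by blast
  \<comment> \<open>the excess of \<open>s\<close> over \<open>e\<close> contracts by the factor \<open>1 - \<gamma> k \<le> exp (- \<gamma> k)\<close>\<close>
  define t where "t k = max (s k - e) 0" for k
  have t0: "t k \<ge> 0" for k by (simp add: t_def)
  have step: "t (Suc k) \<le> (1 - \<gamma> k) * t k" if "k \<ge> N" for k
  proof -
    have "\<gamma> k * \<delta> k \<le> \<gamma> k * e" using N[OF that] g[of k] by (simp add: mult_left_mono)
    then have "s (Suc k) - e \<le> (1 - \<gamma> k) * (s k - e)"
      using N[OF that] by (simp add: algebra_simps)
    also have "\<dots> \<le> (1 - \<gamma> k) * t k" using g[of k] by (intro mult_left_mono) (auto simp: t_def)
    finally show ?thesis using g[of k] by (auto simp: t_def)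
  qed
  define \<Gamma> where "\<Gamma> m = (\<Sum>j<m. \<gamma> (N + j))" for m
  have bound: "t (N + m) \<le> t N * exp (- \<Gamma> m)" for m
  proof (induction m)
    case (Suc m)
    have "t (N + Suc m) \<le> (1 - \<gamma> (N + m)) * t (N + m)" using step[of "N + m"] by simp
    also have "\<dots> \<le> exp (- \<gamma> (N + m)) * (t N * exp (- \<Gamma> m))"
      using exp_ge_add_one_self[of "- \<gamma> (N + m)"] t0 Suc.IH g[of "N + m"]
      by (intro mult_mono) auto
    also have "\<dots> = t N * exp (- \<Gamma> (Suc m))" by (simp add: \<Gamma>_def exp_add[symmetric] algebra_simps)
    finally show ?case .
  qed (simp add: \<Gamma>_def)
  have "\<not> summable (\<lambda>j. \<gamma> (N + j))" using ns by (simp add: add.commute summable_iff_shift)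
  then obtain m0 where m0: "\<Gamma> m0 > t N / e"
    unfolding \<Gamma>_def by (rule not_summable_nonneg_sums_unbounded) (use g in \<open>simp add: less_imp_le\<close>)
  show "\<exists>n0. \<forall>k\<ge>n0. norm (s k - 0) < \<epsilon>"
  proof (intro exI allI impI)
    fix k assume "k \<ge> N + m0"
    define m where "m = k - N"
    with \<open>k \<ge> N + m0\<close> have k: "k = N + m" and "m \<ge> m0" by auto
    then have "\<Gamma> m0 \<le> \<Gamma> m" unfolding \<Gamma>_def using g by (intro sum_mono2) (auto simp: less_imp_le)
    with m0 have "t N / e < exp (\<Gamma> m)"
      using exp_ge_add_one_self[of "\<Gamma> m"] by linarith
    then have "t N < e * exp (\<Gamma> m)" using e0 by (simp add: field_simps)
    then have "t N * exp (- \<Gamma> m) < e" by (simp add: exp_minus field_simps)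
    with bound[of m] have "s k - e < e" by (simp add: k t_def)
    then show "norm (s k - 0) < \<epsilon>" using s0[of k] by (simp add: e_def)
  qed
qed

section \<open>Convergence of the hybrid iteration\<close>

lemma norm_scaleR_sum3_le:
  fixes A B C :: "'a::real_normed_vector"
  assumes "0 \<le> a" "0 \<le> b" "0 \<le> c"
  shows "norm (a *\<^sub>R A + b *\<^sub>R B + c *\<^sub>R C) \<le> a * norm A + b * norm B + c * norm C"
proof -
  have "norm (a *\<^sub>R A + b *\<^sub>R B + c *\<^sub>R C) \<le> norm (a *\<^sub>R A) + norm (b *\<^sub>R B) + norm (c *\<^sub>R C)"
    by (meson norm_triangle_le norm_triangle_ineq add_mono order_refl)
  then show ?thesis using assms by simp
qed

locale hybrid_iteration =
  fixes S T W :: "'a::euclidean_space \<Rightarrow> 'a" and r :: real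
    and \<alpha> \<beta> :: "nat \<Rightarrow> real" and x :: "nat \<Rightarrow> 'a" and xs :: 'a
  assumes r: "0 \<le> r" "r < 1"
    and S_contraction: "\<And>a b. norm (S a - S b) \<le> r * norm (a - b)"
    and T_nonexpansive: "\<And>a b. norm (T a - T b) \<le> norm (a - b)"
    and W_nonexpansive: "\<And>a b. norm (W a - W b) \<le> norm (a - b)"
    and \<alpha>: "\<And>k. 0 < \<alpha> k \<and> \<alpha> k < 1" and \<beta>: "\<And>k. 0 < \<beta> k \<and> \<beta> k < 1"
    and \<alpha>_tendsto_0: "\<alpha> \<longlonglongrightarrow> 0" and \<alpha>_not_summable: "\<not> summable \<alpha>"
    and \<beta>_over_\<alpha>: "(\<lambda>k. \<beta> k / \<alpha> k) \<longlonglongrightarrow> 0"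
    and increments: "(\<lambda>k. (\<bar>\<beta> (Suc k) - \<beta> k\<bar> + \<bar>\<alpha> (Suc k) - \<alpha> k\<bar>) / \<alpha> (Suc k)) \<longlonglongrightarrow> 0"
    and x_Suc: "\<And>k. x (Suc k) = \<alpha> k *\<^sub>R S (x k) + ((1 - \<alpha> k) * \<beta> k) *\<^sub>R T (x k)
      + ((1 - \<alpha> k) * (1 - \<beta> k)) *\<^sub>R W (x k)"
    and xs_fixpoint: "W xs = xs"
    and xs_variational: "\<And>y. W y = y \<Longrightarrow> 0 \<le> (xs - S xs) \<bullet> (y - xs)"
begin

lemma weights_nonneg: "0 \<le> \<alpha> k" "0 \<le> (1 - \<alpha> k) * \<beta> k" "0 \<le> (1 - \<alpha> k) * (1 - \<beta> k)"
  using \<alpha>[of k] \<beta>[of k] by auto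

lemma x_Suc_minus: "x (Suc k) - y = \<alpha> k *\<^sub>R (S (x k) - y) + ((1 - \<alpha> k) * \<beta> k) *\<^sub>R (T (x k) - y)
    + ((1 - \<alpha> k) * (1 - \<beta> k)) *\<^sub>R (W (x k) - y)"
  by (simp add: x_Suc algebra_simps)

lemma \<beta>_tendsto_0: "\<beta> \<longlonglongrightarrow> 0"
proof -
  have "(\<lambda>k. \<beta> k / \<alpha> k * \<alpha> k) \<longlonglongrightarrow> 0 * 0" by (rule tendsto_mult[OF \<beta>_over_\<alpha> \<alpha>_tendsto_0])
  moreover have "\<beta> k / \<alpha> k * \<alpha> k = \<beta> k" for k using \<alpha>[of k] by simp
  ultimately show ?thesis by simp
qed

lemma norm_S_minus_xs: "norm (S y - xs) \<le> r * norm (y - xs) + norm (S xs - xs)"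
  using S_contraction[of y xs] norm_triangle_ineq[of "S y - S xs" "S xs - xs"] by simp

lemma norm_T_minus_xs: "norm (T y - xs) \<le> norm (y - xs) + norm (T xs - xs)"
  using T_nonexpansive[of y xs] norm_triangle_ineq[of "T y - T xs" "T xs - xs"] by simp

lemma norm_W_minus_xs: "norm (W y - xs) \<le> norm (y - xs)"
  using W_nonexpansive[of y xs] by (simp add: xs_fixpoint)

lemma dist_Suc_le:
  assumes "\<beta> k \<le> \<alpha> k"
  shows "norm (x (Suc k) - xs) \<le> (1 - \<alpha> k * (1 - r)) * norm (x k - xs) + \<alpha> k * (norm (S xs - xs) + norm (T xs - xs))"
proof -
  have "norm (x (Suc k) - xs) \<le> \<alpha> k * (r * norm (x k - xs) + norm (S xs - xs))
      + ((1 - \<alpha> k) * \<beta> k) * (norm (x k - xs) + norm (T xs - xs))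
      + ((1 - \<alpha> k) * (1 - \<beta> k)) * norm (x k - xs)"
    unfolding x_Suc_minus using weights_nonneg[of k]
    by (intro order_trans[OF norm_scaleR_sum3_le] add_mono mult_left_mono
        norm_S_minus_xs norm_T_minus_xs norm_W_minus_xs) auto
  also have "\<dots> = (1 - \<alpha> k * (1 - r)) * norm (x k - xs) + \<alpha> k * norm (S xs - xs)
      + ((1 - \<alpha> k) * \<beta> k) * norm (T xs - xs)"
    by (simp add: algebra_simps)
  also have "((1 - \<alpha> k) * \<beta> k) * norm (T xs - xs) \<le> \<alpha> k * norm (T xs - xs)"
    using assms \<alpha>[of k] \<beta>[of k] by (intro mult_right_mono) (auto intro: order_trans[OF mult_left_le_one_le])
  finally show ?thesis by (simp add: algebra_simps)
qed

lemma dist_bounded: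
  obtains B where "\<And>k. norm (x k - xs) \<le> B"
proof -
  have "eventually (\<lambda>k. \<beta> k / \<alpha> k < 1) sequentially" using \<beta>_over_\<alpha> by (rule order_tendstoD) simp
  then obtain K where K: "\<And>k. k \<ge> K \<Longrightarrow> \<beta> k \<le> \<alpha> k"
    unfolding eventually_sequentially using \<alpha> by (metis divide_less_eq_1_pos less_imp_le)
  define c where "c = norm (S xs - xs) + norm (T xs - xs)"
  define B where "B = max (Max ((\<lambda>k. norm (x k - xs)) ` {..K})) (c / (1 - r))"
  have "norm (x k - xs) \<le> B" for k
  proof (induction k)
    case (Suc k)
    show ?case
    proof (cases "Suc k \<le> K")
      case False
      then have "norm (x (Suc k) - xs) \<le> (1 - \<alpha> k * (1 - r)) * norm (x k - xs) + \<alpha> k * (1 - r) * (c / (1 - r))"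
        using dist_Suc_le[of k] K[of k] r by (simp add: c_def)
      also have "\<dots> \<le> (1 - \<alpha> k * (1 - r)) * B + \<alpha> k * (1 - r) * B"
        using Suc.IH \<alpha>[of k] r
        by (intro add_mono mult_left_mono) (auto simp: B_def mult_le_one)
      finally show ?thesis by (simp add: algebra_simps)
    qed (simp add: B_def le_max_iff_disj)
  qed (simp add: B_def le_max_iff_disj)
  then show ?thesis by (rule that)
qed

lemma operator_gaps_bounded:
  obtains C where "0 \<le> C" and "\<And>k. norm (S (x k) - W (x k)) \<le> C" and "\<And>k. norm (T (x k) - W (x k)) \<le> C"
proof -
  obtain B where B: "\<And>k. norm (x k - xs) \<le> B" using dist_bounded by metis
  define C where "C = 2 * B + norm (S xs - xs) + norm (T xs - xs)"
  have rB: "r * norm (x k - xs) \<le> B" for k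
    using mult_left_le_one_le[of "norm (x k - xs)" r] B[of k] r by simp
  have "norm (S (x k) - W (x k)) \<le> norm (S (x k) - xs) + norm (W (x k) - xs)"
    and "norm (T (x k) - W (x k)) \<le> norm (T (x k) - xs) + norm (W (x k) - xs)" for k
    using norm_triangle_ineq4[of "S (x k) - xs" "W (x k) - xs"]
      norm_triangle_ineq4[of "T (x k) - xs" "W (x k) - xs"] by simp_all
  then have gS: "norm (S (x k) - W (x k)) \<le> C" and gT: "norm (T (x k) - W (x k)) \<le> C" for k
    using norm_S_minus_xs[of "x k"] norm_T_minus_xs[of "x k"] norm_W_minus_xs[of "x k"] B[of k] rB[of k]
      norm_ge_zero[of "S xs - xs"] norm_ge_zero[of "T xs - xs"]
    unfolding C_def by (smt (verit))+
  have "0 \<le> C"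
    using B[of 0] norm_ge_zero[of "x 0 - xs"] norm_ge_zero[of "S xs - xs"] norm_ge_zero[of "T xs - xs"]
    unfolding C_def by linarith
  from that[OF this gS gT] show ?thesis .
qed

lemma step_Suc_le:
  assumes C: "\<And>k. norm (S (x k) - W (x k)) \<le> C" "\<And>k. norm (T (x k) - W (x k)) \<le> C" "0 \<le> C"
  shows "norm (x (Suc (Suc k)) - x (Suc k)) \<le> (1 - \<alpha> (Suc k) * (1 - r)) * norm (x (Suc k) - x k)
    + 2 * C * (\<bar>\<beta> (Suc k) - \<beta> k\<bar> + \<bar>\<alpha> (Suc k) - \<alpha> k\<bar>)"
proof -
  define a' b' a b where "a' = \<alpha> (Suc k)" and "b' = \<beta> (Suc k)" and "a = \<alpha> k" and "b = \<beta> k"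
  define y where "y = x k"
  have diff: "x (Suc (Suc k)) - x (Suc k) = (a' *\<^sub>R (S (x (Suc k)) - S y) + ((1 - a') * b') *\<^sub>R (T (x (Suc k)) - T y)
      + ((1 - a') * (1 - b')) *\<^sub>R (W (x (Suc k)) - W y))
      + ((a' - a) *\<^sub>R (S y - W y) + ((1 - a') * b' - (1 - a) * b) *\<^sub>R (T y - W y))"
    by (simp only: x_Suc[of "Suc k"] x_Suc[of k] a'_def b'_def a_def b_def y_def)
      (simp add: algebra_simps flip: x_Suc)
  have "norm (a' *\<^sub>R (S (x (Suc k)) - S y) + ((1 - a') * b') *\<^sub>R (T (x (Suc k)) - T y)
      + ((1 - a') * (1 - b')) *\<^sub>R (W (x (Suc k)) - W y)) \<le> (1 - a' * (1 - r)) * norm (x (Suc k) - y)"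
  proof -
    have "norm (a' *\<^sub>R (S (x (Suc k)) - S y) + ((1 - a') * b') *\<^sub>R (T (x (Suc k)) - T y)
        + ((1 - a') * (1 - b')) *\<^sub>R (W (x (Suc k)) - W y))
        \<le> a' * (r * norm (x (Suc k) - y)) + ((1 - a') * b') * norm (x (Suc k) - y)
          + ((1 - a') * (1 - b')) * norm (x (Suc k) - y)"
      using weights_nonneg[of "Suc k"] unfolding a'_def b'_def
      by (intro order_trans[OF norm_scaleR_sum3_le] add_mono mult_left_mono
          S_contraction T_nonexpansive W_nonexpansive) auto
    then show ?thesis by (simp add: algebra_simps)
  qed
  moreover have "norm ((a' - a) *\<^sub>R (S y - W y) + ((1 - a') * b' - (1 - a) * b) *\<^sub>R (T y - W y))
      \<le> 2 * C * (\<bar>b' - b\<bar> + \<bar>a' - a\<bar>)"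
  proof -
    have "\<bar>(1 - a') * b' - (1 - a) * b\<bar> = \<bar>(1 - a') * (b' - b) - (a' - a) * b\<bar>"
      by (simp add: algebra_simps)
    also have "\<dots> \<le> \<bar>1 - a'\<bar> * \<bar>b' - b\<bar> + \<bar>a' - a\<bar> * \<bar>b\<bar>"
      by (metis abs_mult abs_triangle_ineq4)
    also have "\<dots> \<le> 1 * \<bar>b' - b\<bar> + \<bar>a' - a\<bar> * 1"
      using \<alpha>[of "Suc k"] \<beta>[of k] unfolding a'_def b_def by (intro add_mono mult_mono) auto
    finally have w: "\<bar>(1 - a') * b' - (1 - a) * b\<bar> \<le> \<bar>b' - b\<bar> + \<bar>a' - a\<bar>" by simp
    have "norm ((a' - a) *\<^sub>R (S y - W y) + ((1 - a') * b' - (1 - a) * b) *\<^sub>R (T y - W y))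
        \<le> \<bar>a' - a\<bar> * norm (S y - W y) + \<bar>(1 - a') * b' - (1 - a) * b\<bar> * norm (T y - W y)"
      by (metis norm_scaleR norm_triangle_ineq)
    also have "\<dots> \<le> \<bar>a' - a\<bar> * C + (\<bar>b' - b\<bar> + \<bar>a' - a\<bar>) * C"
      using C w unfolding y_def by (intro add_mono mult_mono) auto
    also have "\<dots> \<le> 2 * C * (\<bar>b' - b\<bar> + \<bar>a' - a\<bar>)"
      using C(3) by (simp add: algebra_simps)
    finally show ?thesis .
  qed
  moreover have "norm (x (Suc (Suc k)) - x (Suc k)) \<le> norm (a' *\<^sub>R (S (x (Suc k)) - S y)
      + ((1 - a') * b') *\<^sub>R (T (x (Suc k)) - T y) + ((1 - a') * (1 - b')) *\<^sub>R (W (x (Suc k)) - W y))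
      + norm ((a' - a) *\<^sub>R (S y - W y) + ((1 - a') * b' - (1 - a) * b) *\<^sub>R (T y - W y))"
    unfolding diff by (rule norm_triangle_ineq)
  ultimately show ?thesis
    unfolding a'_def b'_def a_def b_def y_def by linarith
qed

lemma steps_tendsto_0: "(\<lambda>k. norm (x (Suc k) - x k)) \<longlonglongrightarrow> 0"
proof -
  obtain C where C: "0 \<le> C" "\<And>k. norm (S (x k) - W (x k)) \<le> C" "\<And>k. norm (T (x k) - W (x k)) \<le> C"
    using operator_gaps_bounded by metis
  define \<gamma> where "\<gamma> k = \<alpha> (Suc k) * (1 - r)" for k
  define \<delta> where "\<delta> k = 2 * C * ((\<bar>\<beta> (Suc k) - \<beta> k\<bar> + \<bar>\<alpha> (Suc k) - \<alpha> k\<bar>) / \<alpha> (Suc k)) / (1 - r)" for k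
  have r1: "0 < 1 - r" using r by simp
  show ?thesis
  proof (rule xu_recursion_tendsto_zero[where \<gamma> = \<gamma> and \<delta> = \<delta>])
    show "0 < \<gamma> k \<and> \<gamma> k \<le> 1" for k
      using \<alpha>[of "Suc k"] r unfolding \<gamma>_def by (auto intro: mult_le_one)
    show "\<not> summable \<gamma>"
      using \<alpha>_not_summable r1 unfolding \<gamma>_def by (simp add: summable_Suc_iff mult.commute[of _ "1 - r"])
    have "\<gamma> k * \<delta> k = 2 * C * (\<bar>\<beta> (Suc k) - \<beta> k\<bar> + \<bar>\<alpha> (Suc k) - \<alpha> k\<bar>)" for k
      using \<alpha>[of "Suc k"] r1 unfolding \<gamma>_def \<delta>_def by (simp add: field_simps)
    then show "eventually (\<lambda>k. norm (x (Suc (Suc k)) - x (Suc k)) \<le> (1 - \<gamma> k) * norm (x (Suc k) - x k) + \<gamma> k * \<delta> k)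
        sequentially"
      using step_Suc_le[OF C(2,3,1)] by (simp add: \<gamma>_def)
    have "\<delta> \<longlonglongrightarrow> 2 * C * 0 / (1 - r)"
      unfolding \<delta>_def by (intro tendsto_intros increments) (use r1 in simp)
    then have "\<delta> \<longlonglongrightarrow> 0" by simp
    show "eventually (\<lambda>k. \<delta> k \<le> \<epsilon>) sequentially" if "\<epsilon> > 0" for \<epsilon>
      using order_tendstoD(2)[OF \<open>\<delta> \<longlonglongrightarrow> 0\<close> that] by (rule eventually_mono) simp
  qed simp
qed

lemma fixpoint_defect_tendsto_0: "(\<lambda>k. x k - W (x k)) \<longlonglongrightarrow> 0"
proof -
  obtain C where C: "0 \<le> C" "\<And>k. norm (S (x k) - W (x k)) \<le> C" "\<And>k. norm (T (x k) - W (x k)) \<le> C"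
    using operator_gaps_bounded by metis
  have bound: "norm (x k - W (x k)) \<le> norm (x (Suc k) - x k) + C * (\<alpha> k + \<beta> k)" for k
  proof -
    have "x (Suc k) - W (x k) = \<alpha> k *\<^sub>R (S (x k) - W (x k)) + ((1 - \<alpha> k) * \<beta> k) *\<^sub>R (T (x k) - W (x k))"
      by (simp add: x_Suc algebra_simps)
    then have "norm (x (Suc k) - W (x k))
        \<le> norm (\<alpha> k *\<^sub>R (S (x k) - W (x k))) + norm (((1 - \<alpha> k) * \<beta> k) *\<^sub>R (T (x k) - W (x k)))"
      by (metis norm_triangle_ineq)
    also have "\<dots> = \<alpha> k * norm (S (x k) - W (x k)) + ((1 - \<alpha> k) * \<beta> k) * norm (T (x k) - W (x k))"
      using weights_nonneg[of k] by simp
    also have "\<dots> \<le> \<alpha> k * C + \<beta> k * C"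
      using weights_nonneg[of k] C \<alpha>[of k] \<beta>[of k]
      by (intro add_mono mult_mono) (auto simp: mult_left_le_one_le)
    finally have "norm (x (Suc k) - W (x k)) \<le> \<alpha> k * C + \<beta> k * C" .
    then show ?thesis
      using norm_triangle_ineq4[of "x (Suc k) - W (x k)" "x (Suc k) - x k"] by (simp add: algebra_simps)
  qed
  have "(\<lambda>k. norm (x (Suc k) - x k) + C * (\<alpha> k + \<beta> k)) \<longlonglongrightarrow> 0 + C * (0 + 0)"
    by (intro tendsto_add tendsto_mult_left steps_tendsto_0 \<alpha>_tendsto_0 \<beta>_tendsto_0)
  then have "(\<lambda>k. norm (x (Suc k) - x k) + C * (\<alpha> k + \<beta> k)) \<longlonglongrightarrow> 0" by simp
  with always_eventually[OF allI[OF bound]] show ?thesis by (rule Lim_null_comparison)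
qed

text \<open>Every cluster point of the iterates is a fixed point of \<open>W\<close> (by the vanishing defect and
  continuity of \<open>W\<close>), so the variational inequality at \<open>xs\<close> bounds the inner products asymptotically.\<close>

lemma eventually_inner_le:
  assumes "\<epsilon> > 0"
  shows "eventually (\<lambda>k. (S xs - xs) \<bullet> (x k - xs) \<le> \<epsilon>) sequentially"
proof (rule ccontr)
  assume "\<not> ?thesis"
  then have "infinite {k. \<epsilon> < (S xs - xs) \<bullet> (x k - xs)}"
    unfolding cofinite_eq_sequentially[symmetric] eventually_cofinite by (simp add: not_le)
  then obtain \<sigma> :: "nat \<Rightarrow> nat" where \<sigma>: "strict_mono \<sigma>" "\<And>n. \<epsilon> < (S xs - xs) \<bullet> (x (\<sigma> n) - xs)"
    using infinite_enumerate by blast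
  obtain B where B: "\<And>k. norm (x k - xs) \<le> B" using dist_bounded by metis
  have "norm (x k) \<le> B + norm xs" for k using B[of k] norm_triangle_sub[of "x k" xs] by linarith
  then have "bounded (range (x \<circ> \<sigma>))" unfolding bounded_iff by auto
  then obtain l \<rho> where \<rho>: "strict_mono \<rho>" "((x \<circ> \<sigma>) \<circ> \<rho>) \<longlonglongrightarrow> l"
    using bounded_imp_convergent_subsequence by blast
  define \<tau> where "\<tau> = \<sigma> \<circ> \<rho>"
  have \<tau>: "strict_mono \<tau>" unfolding \<tau>_def using \<sigma>(1) \<rho>(1) by (rule strict_mono_o)
  have xl: "(\<lambda>n. x (\<tau> n)) \<longlonglongrightarrow> l" using \<rho>(2) by (simp add: \<tau>_def o_def)
  have "continuous_on UNIV W"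
    by (rule lipschitz_on_continuous_on[of 1], rule lipschitz_onI) (use W_nonexpansive in \<open>auto simp: dist_norm\<close>)
  then have "isCont W l" by (simp add: continuous_on_eq_continuous_at)
  then have "(\<lambda>n. x (\<tau> n) - W (x (\<tau> n))) \<longlonglongrightarrow> l - W l"
    using xl by (intro tendsto_intros isCont_tendsto_compose[of l W])
  moreover have "(\<lambda>n. x (\<tau> n) - W (x (\<tau> n))) \<longlonglongrightarrow> 0"
    using LIMSEQ_subseq_LIMSEQ[OF fixpoint_defect_tendsto_0 \<tau>] by (simp add: o_def)
  ultimately have "l - W l = 0" by (rule LIMSEQ_unique)
  then have "W l = l" by simp
  have "(\<lambda>n. (S xs - xs) \<bullet> (x (\<tau> n) - xs)) \<longlonglongrightarrow> (S xs - xs) \<bullet> (l - xs)"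
    by (intro tendsto_intros xl)
  moreover have "\<epsilon> \<le> (S xs - xs) \<bullet> (x (\<tau> n) - xs)" for n using \<sigma>(2) by (simp add: \<tau>_def less_imp_le)
  ultimately have "\<epsilon> \<le> (S xs - xs) \<bullet> (l - xs)" by (intro LIMSEQ_le_const) auto
  moreover have "0 \<le> (xs - S xs) \<bullet> (l - xs)" by (rule xs_variational[OF \<open>W l = l\<close>])
  ultimately show False using \<open>\<epsilon> > 0\<close> by (simp add: inner_diff_left)
qed

lemma dist_power2_Suc_le:
  assumes B: "\<And>k. norm (x k - xs) \<le> B"
  shows "(norm (x (Suc k) - xs))\<^sup>2 \<le> (1 - \<alpha> k * (1 - r)) * (norm (x k - xs))\<^sup>2
    + \<beta> k * (2 * B * norm (T xs - xs) + (norm (T xs - xs))\<^sup>2) + 2 * \<alpha> k * ((S xs - xs) \<bullet> (x (Suc k) - xs))"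
proof -
  define c where "c = norm (T xs - xs)"
  define g where "g = \<alpha> k * (1 - r)"
  define P where "P = \<alpha> k *\<^sub>R (S (x k) - S xs) + ((1 - \<alpha> k) * \<beta> k) *\<^sub>R (T (x k) - xs)
    + ((1 - \<alpha> k) * (1 - \<beta> k)) *\<^sub>R (W (x k) - xs)"
  define Q where "Q = \<alpha> k *\<^sub>R (S xs - xs)"
  have PQ: "x (Suc k) - xs = P + Q" unfolding P_def Q_def x_Suc_minus by (simp add: algebra_simps)
  have g: "0 \<le> g" "g \<le> 1" using \<alpha>[of k] r unfolding g_def by (auto intro: mult_le_one)
  have ak: "0 \<le> norm (x k - xs)" "norm (x k - xs) \<le> B" using B[of k] by auto
  have "norm P \<le> \<alpha> k * (r * norm (x k - xs)) + ((1 - \<alpha> k) * \<beta> k) * (norm (x k - xs) + c)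
      + ((1 - \<alpha> k) * (1 - \<beta> k)) * norm (x k - xs)"
    unfolding P_def c_def using weights_nonneg[of k]
    by (intro order_trans[OF norm_scaleR_sum3_le] add_mono mult_left_mono
        S_contraction norm_T_minus_xs norm_W_minus_xs) auto
  also have "\<dots> \<le> (1 - g) * norm (x k - xs) + \<beta> k * c"
    using \<alpha>[of k] \<beta>[of k] mult_left_le_one_le[of "\<beta> k" "1 - \<alpha> k"]
    by (simp add: g_def c_def algebra_simps mult_right_mono)
  finally have nP: "norm P \<le> (1 - g) * norm (x k - xs) + \<beta> k * c" .
  have "(norm P)\<^sup>2 \<le> ((1 - g) * norm (x k - xs) + \<beta> k * c)\<^sup>2"
    using nP by (intro power_mono) auto
  also have "\<dots> = (1 - g)\<^sup>2 * (norm (x k - xs))\<^sup>2 + \<beta> k * (2 * ((1 - g) * norm (x k - xs)) * c) + (\<beta> k)\<^sup>2 * c\<^sup>2"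
    by (simp add: power2_eq_square algebra_simps)
  also have "\<dots> \<le> (1 - g) * (norm (x k - xs))\<^sup>2 + \<beta> k * (2 * B * c) + \<beta> k * c\<^sup>2"
  proof (intro add_mono)
    show "(1 - g)\<^sup>2 * (norm (x k - xs))\<^sup>2 \<le> (1 - g) * (norm (x k - xs))\<^sup>2"
      using g by (intro mult_right_mono) (auto simp: power2_eq_square mult_left_le_one_le)
    have "(1 - g) * norm (x k - xs) \<le> B" using mult_left_le_one_le[of "norm (x k - xs)" "1 - g"] g ak by linarith
    then show "\<beta> k * (2 * ((1 - g) * norm (x k - xs)) * c) \<le> \<beta> k * (2 * B * c)"
      using \<beta>[of k] by (intro mult_left_mono mult_right_mono) (auto simp: c_def)
    show "(\<beta> k)\<^sup>2 * c\<^sup>2 \<le> \<beta> k * c\<^sup>2"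
      using \<beta>[of k] by (intro mult_right_mono) (auto simp: power2_eq_square mult_left_le_one_le)
  qed
  finally have "(norm P)\<^sup>2 \<le> (1 - g) * (norm (x k - xs))\<^sup>2 + \<beta> k * (2 * B * c + c\<^sup>2)"
    by (simp add: algebra_simps)
  moreover have "(norm (P + Q))\<^sup>2 \<le> (norm P)\<^sup>2 + 2 * (Q \<bullet> (P + Q))"
    by (simp add: power2_norm_eq_inner inner_add_left inner_add_right inner_commute)
  moreover have "Q \<bullet> (P + Q) = \<alpha> k * ((S xs - xs) \<bullet> (x (Suc k) - xs))" by (simp add: PQ Q_def)
  ultimately show ?thesis by (simp add: PQ g_def c_def)
qed

theorem tendsto_xs: "x \<longlonglongrightarrow> xs"
proof -
  obtain B where B: "\<And>k. norm (x k - xs) \<le> B" using dist_bounded by metis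
  define K where "K = 2 * B * norm (T xs - xs) + (norm (T xs - xs))\<^sup>2"
  define \<delta> where "\<delta> k = (\<beta> k / \<alpha> k * K + 2 * ((S xs - xs) \<bullet> (x (Suc k) - xs))) / (1 - r)" for k
  have r1: "0 < 1 - r" using r by simp
  have "(\<lambda>k. (norm (x k - xs))\<^sup>2) \<longlonglongrightarrow> 0"
  proof (rule xu_recursion_tendsto_zero[where \<gamma> = "\<lambda>k. \<alpha> k * (1 - r)" and \<delta> = \<delta>])
    show "0 < \<alpha> k * (1 - r) \<and> \<alpha> k * (1 - r) \<le> 1" for k using \<alpha>[of k] r by (auto intro: mult_le_one)
    show "\<not> summable (\<lambda>k. \<alpha> k * (1 - r))" using \<alpha>_not_summable r1 by (simp add: mult.commute[of _ "1 - r"])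
    have "\<alpha> k * (1 - r) * \<delta> k = \<beta> k * K + 2 * \<alpha> k * ((S xs - xs) \<bullet> (x (Suc k) - xs))" for k
      using \<alpha>[of k] r1 unfolding \<delta>_def by (simp add: field_simps)
    then show "eventually (\<lambda>k. (norm (x (Suc k) - xs))\<^sup>2
        \<le> (1 - \<alpha> k * (1 - r)) * (norm (x k - xs))\<^sup>2 + \<alpha> k * (1 - r) * \<delta> k) sequentially"
      using dist_power2_Suc_le[OF B] by (simp add: K_def add.assoc)
  next
    fix \<epsilon> :: real assume "\<epsilon> > 0"
    have "(\<lambda>k. \<beta> k / \<alpha> k * K) \<longlonglongrightarrow> 0 * K" by (intro tendsto_mult_right \<beta>_over_\<alpha>)
    then have "eventually (\<lambda>k. \<beta> k / \<alpha> k * K < \<epsilon> * (1 - r) / 2) sequentially"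
      using \<open>\<epsilon> > 0\<close> r1 by (intro order_tendstoD) auto
    moreover have "eventually (\<lambda>k. (S xs - xs) \<bullet> (x (Suc k) - xs) \<le> \<epsilon> * (1 - r) / 4) sequentially"
      unfolding eventually_sequentially_Suc[of "\<lambda>k. (S xs - xs) \<bullet> (x k - xs) \<le> \<epsilon> * (1 - r) / 4"]
      using \<open>\<epsilon> > 0\<close> r1 by (intro eventually_inner_le) simp
    ultimately show "eventually (\<lambda>k. \<delta> k \<le> \<epsilon>) sequentially"
    proof eventually_elim
      case (elim k)
      then have "\<beta> k / \<alpha> k * K + 2 * ((S xs - xs) \<bullet> (x (Suc k) - xs)) \<le> \<epsilon> * (1 - r)" by linarith
      then show ?case using r1 unfolding \<delta>_def by (simp add: divide_le_eq)
    qed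
  qed simp
  then have "(\<lambda>k. norm (x k - xs)) \<longlonglongrightarrow> 0"
    using tendsto_real_sqrt[of "\<lambda>k. (norm (x k - xs))\<^sup>2" 0] by simp
  then show ?thesis by (simp add: tendsto_norm_zero_iff LIM_zero_iff)
qed

end

section \<open>The trilevel problem\<close>

lemma tendsto_zero_if_limsup_ereal_zero:
  fixes f :: "nat \<Rightarrow> real"
  assumes nonneg: "\<And>k. 0 \<le> f k" and lim: "limsup (\<lambda>k. ereal (f k)) = 0"
  shows "f \<longlonglongrightarrow> 0"
proof -
  have "0 \<le> liminf (\<lambda>k. ereal (f k))" using nonneg by (intro Liminf_bounded) simp
  moreover have "liminf (\<lambda>k. ereal (f k)) \<le> 0"
    using Liminf_le_Limsup[of sequentially "\<lambda>k. ereal (f k)"] lim by simp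
  ultimately have "(\<lambda>k. ereal (f k)) \<longlonglongrightarrow> ereal 0"
    using lim by (intro Liminf_eq_Limsup) (simp_all add: zero_ereal_def)
  then show ?thesis by simp
qed

lemma weight_increments_tendsto_zero:
  fixes \<alpha> \<beta> :: "nat \<Rightarrow> real"
  assumes \<alpha>: "\<And>k. 0 < \<alpha> k" and \<beta>: "\<And>k. 0 < \<beta> k \<and> \<beta> k < 1"
    and lim: "limsup (\<lambda>k. ereal ((\<bar>\<beta> k - \<beta> (k - 1)\<bar> + \<bar>\<alpha> k - \<alpha> (k - 1)\<bar>) / (\<alpha> k * \<beta> k))) = 0"
  shows "(\<lambda>k. (\<bar>\<beta> (Suc k) - \<beta> k\<bar> + \<bar>\<alpha> (Suc k) - \<alpha> k\<bar>) / \<alpha> (Suc k)) \<longlonglongrightarrow> 0"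
proof (rule Lim_null_comparison)
  define q where "q k = (\<bar>\<beta> k - \<beta> (k - 1)\<bar> + \<bar>\<alpha> k - \<alpha> (k - 1)\<bar>) / (\<alpha> k * \<beta> k)" for k
  have "q \<longlonglongrightarrow> 0"
    using lim \<alpha> \<beta> unfolding q_def
    by (intro tendsto_zero_if_limsup_ereal_zero) (auto intro!: divide_nonneg_pos mult_pos_pos)
  then show "(\<lambda>k. q (Suc k)) \<longlonglongrightarrow> 0" by (rule LIMSEQ_Suc)
  \<comment> \<open>dividing by \<open>\<beta> < 1\<close> only enlarges the quotient\<close>
  have "norm ((\<bar>\<beta> (Suc k) - \<beta> k\<bar> + \<bar>\<alpha> (Suc k) - \<alpha> k\<bar>) / \<alpha> (Suc k)) \<le> q (Suc k)" for k
    using \<alpha>[of "Suc k"] \<beta>[of "Suc k"] unfolding q_def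
    by (auto intro!: divide_left_mono mult_left_le_one_le simp: mult_pos_pos)
  then show "eventually (\<lambda>k. norm ((\<bar>\<beta> (Suc k) - \<beta> k\<bar> + \<bar>\<alpha> (Suc k) - \<alpha> k\<bar>) / \<alpha> (Suc k)) \<le> q (Suc k))
      sequentially" by simp
qed

text \<open>The solution of the variational inequality over \<open>Y\<close> is the fixed point of the contraction
  \<open>P\<^sub>Y \<circ> S\<close>, by the obtuse-angle characterisation of the projection \<open>P\<^sub>Y\<close>.\<close>

lemma variational_inequality_solution_exists:
  fixes S :: "'a::euclidean_space \<Rightarrow> 'a"
  assumes Y: "closed Y" "convex Y" "Y \<noteq> {}" and r: "0 \<le> r" "r < 1"
    and S: "\<And>a b. norm (S a - S b) \<le> r * norm (a - b)"
  obtains z where "z \<in> Y" and "\<And>y. y \<in> Y \<Longrightarrow> 0 \<le> (z - S z) \<bullet> (y - z)"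
proof -
  have "dist (closest_point Y (S a)) (closest_point Y (S b)) \<le> r * dist a b" for a b
    using closest_point_lipschitz[OF Y(2,1,3), of "S a" "S b"] S[of a b] by (simp add: dist_norm)
  then obtain z where z: "closest_point Y (S z) = z"
    using banach_fix_type[OF r, of "\<lambda>a. closest_point Y (S a)"] by blast
  then have "z \<in> Y" using closest_point_in_set[OF Y(1,3), of "S z"] by simp
  moreover have "0 \<le> (z - S z) \<bullet> (y - z)" if "y \<in> Y" for y
    using closest_point_dot[OF Y(2,1) that, of "S z"] z by (simp add: inner_diff_left)
  ultimately show ?thesis by (rule that)
qed

lemma variational_inequality_solution_unique:
  fixes S :: "'a::real_inner \<Rightarrow> 'a"
  assumes r: "r < 1" and S: "\<And>a b. norm (S a - S b) \<le> r * norm (a - b)"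
    and z: "0 \<le> (z - S z) \<bullet> (z' - z)" and z': "0 \<le> (z' - S z') \<bullet> (z - z')"
  shows "z = z'"
proof -
  have "(norm (z - z'))\<^sup>2 \<le> (S z - S z') \<bullet> (z - z')"
    using z z' by (simp add: power2_norm_eq_inner inner_diff_left inner_diff_right inner_commute algebra_simps)
  also have "\<dots> \<le> norm (S z - S z') * norm (z - z')" by (rule norm_cauchy_schwarz)
  also have "\<dots> \<le> r * norm (z - z') * norm (z - z')" using S[of z z'] by (rule mult_right_mono) simp
  finally have "(1 - r) * (norm (z - z') * norm (z - z')) \<le> 0"
    by (simp add: power2_eq_square algebra_simps)
  with r have "norm (z - z') * norm (z - z') \<le> 0" by (simp add: mult_le_0_iff)
  then have "norm (z - z') = 0" by (metis mult_le_0_iff norm_ge_zero antisym)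
  then show ?thesis by simp
qed

lemma argmin_on_if_gradient_step_variational:
  fixes \<omega> :: "'a::real_inner \<Rightarrow> real"
  assumes sc: "strongly_convex \<mu> \<omega>" and mu: "0 \<le> \<mu>"
    and wd: "\<And>y. (\<omega> has_derivative (\<lambda>v. d\<omega> y \<bullet> v)) (at y)"
    and u: "0 < u" and x: "x \<in> Y"
    and vi: "\<And>y. y \<in> Y \<Longrightarrow> 0 \<le> (x - (x - u *\<^sub>R d\<omega> x)) \<bullet> (y - x)"
  shows "x \<in> argmin_on (\<lambda>y. ereal (\<omega> y)) Y"
  unfolding argmin_on_def
proof (intro CollectI conjI ballI)
  fix y assume "y \<in> Y"
  with vi u have "0 \<le> d\<omega> x \<bullet> (y - x)" by (simp add: zero_le_mult_iff)
  moreover have "0 \<le> \<mu> / 2 * (norm (y - x))\<^sup>2" using mu by simp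
  ultimately show "ereal (\<omega> x) \<le> ereal (\<omega> y)"
    using strongly_convex_gradient_inequality[OF sc wd, of x y] by simp
qed (rule x)

lemma closed_fixpoints_nonexpansive:
  fixes W :: "'a::real_normed_vector \<Rightarrow> 'a"
  assumes "\<And>a b. norm (W a - W b) \<le> norm (a - b)"
  shows "closed {y. W y = y}"
proof -
  have "continuous_on UNIV W"
    by (rule lipschitz_on_continuous_on[of 1], rule lipschitz_onI) (use assms in \<open>auto simp: dist_norm\<close>)
  then show ?thesis by (intro closed_Collect_eq continuous_on_id) auto
qed

theorem mainTheorem4:
  fixes f1 f2 \<omega> :: "'a::euclidean_space \<Rightarrow> real"
    and df1 df2 d\<omega> :: "'a \<Rightarrow> 'a"
    and g1 g2 :: "'a \<Rightarrow> ereal"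
    and Lf1 Lf2 L\<omega> \<mu> u t s :: real
    and \<alpha> \<beta> :: "nat \<Rightarrow> real"
    and x0 :: 'a
    and x :: "nat \<Rightarrow> 'a"
  assumes f1_convex: "convex_on UNIV f1" and f2_convex: "convex_on UNIV f2"
    and f1_grad: "\<And>y. (f1 has_derivative (\<lambda>h. df1 y \<bullet> h)) (at y)"
    and f2_grad: "\<And>y. (f2 has_derivative (\<lambda>h. df2 y \<bullet> h)) (at y)"
    and f1_cont: "continuous_on UNIV df1" and f2_cont: "continuous_on UNIV df2"
    and Lf1_pos: "Lf1 > 0" and Lf2_pos: "Lf2 > 0"
    and f1_lip: "Lf1-lipschitz_on UNIV df1" and f2_lip: "Lf2-lipschitz_on UNIV df2"
    and g1_proper: "proper_fun g1" and g1_lsc: "lsc_fun g1" and g1_convex: "convex_ereal_fun g1"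
    and g2_proper: "proper_fun g2" and g2_lsc: "lsc_fun g2" and g2_convex: "convex_ereal_fun g2"
    and mu_pos: "\<mu> > 0" and \<omega>_sc: "strongly_convex \<mu> \<omega>"
    and \<omega>_grad: "\<And>y. (\<omega> has_derivative (\<lambda>h. d\<omega> y \<bullet> h)) (at y)"
    and \<omega>_cont: "continuous_on UNIV d\<omega>"
    and L\<omega>_pos: "L\<omega> > 0" and \<omega>_lip: "L\<omega>-lipschitz_on UNIV d\<omega>"
    and Ystar_ne: "argmin_on (\<lambda>y. ereal (f2 y) + g2 y) UNIV \<noteq> {}"
    and Xstar_ne: "argmin_on (\<lambda>y. ereal (f1 y) + g1 y) (argmin_on (\<lambda>y. ereal (f2 y) + g2 y) UNIV) \<noteq> {}"
    and u_range: "0 < u" "u \<le> 2 / (L\<omega> + \<mu>)"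
    and t_range: "0 < t" "t \<le> 1 / Lf1"
    and s_range: "0 < s" "s \<le> 1 / Lf2"
    and \<alpha>_range: "\<And>k. 0 < \<alpha> k \<and> \<alpha> k < 1"
    and \<beta>_range: "\<And>k. 0 < \<beta> k \<and> \<beta> k < 1"
    and x_init: "x 0 = x0"
    and x_iter: "\<And>k. x (Suc k) =
        \<alpha> k *\<^sub>R (x k - u *\<^sub>R d\<omega> (x k))
      + ((1 - \<alpha> k) * \<beta> k) *\<^sub>R prox (\<lambda>v. ereal t * g1 v) (x k - t *\<^sub>R df1 (x k))
      + ((1 - \<alpha> k) * (1 - \<beta> k)) *\<^sub>R prox (\<lambda>v. ereal s * g2 v) (x k - s *\<^sub>R df2 (x k))"
    and h1: "limsup (\<lambda>k. ereal (\<beta> k / \<alpha> k)) = 0"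
    and h2: "\<alpha> \<longlonglongrightarrow> 0"
    and h3: "\<not> summable \<alpha>"
    and h4: "limsup (\<lambda>k. ereal ((\<bar>\<beta> k - \<beta> (k - 1)\<bar> + \<bar>\<alpha> k - \<alpha> (k - 1)\<bar>) / (\<alpha> k * \<beta> k))) = 0"
  shows "\<exists>xs. let S = (\<lambda>y. y - u *\<^sub>R d\<omega> y);
                 W = (\<lambda>y. prox (\<lambda>v. ereal s * g2 v) (y - s *\<^sub>R df2 y));
                 P = (\<lambda>z. W z = z \<and> (\<forall>y. W y = y \<longrightarrow> (z - S z) \<bullet> (y - z) \<ge> 0))
             in P xs \<and> (\<forall>z. P z \<longrightarrow> z = xs)
                \<and> xs \<in> argmin_on (\<lambda>y. ereal (\<omega> y)) (argmin_on (\<lambda>y. ereal (f2 y) + g2 y) UNIV)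
                \<and> x \<longlonglongrightarrow> xs"
proof -
  define S where "S = (\<lambda>y::'a. y - u *\<^sub>R d\<omega> y)"
  define T where "T = (\<lambda>y. prox (\<lambda>v. ereal t * g1 v) (y - t *\<^sub>R df1 y))"
  define W where "W = (\<lambda>y. prox (\<lambda>v. ereal s * g2 v) (y - s *\<^sub>R df2 y))"
  define Y where "Y = argmin_on (\<lambda>y. ereal (f2 y) + g2 y) UNIV"
  define r where "r = sqrt (1 - 2 * u * \<mu> * L\<omega> / (L\<omega> + \<mu>))"
  note contraction = gradient_step_contraction[OF \<omega>_sc \<omega>_grad \<omega>_lip mu_pos u_range]
  have r: "0 \<le> r" "r < 1" using contraction(1,2) by (auto simp: r_def)
  have S: "norm (S a - S b) \<le> r * norm (a - b)" for a b unfolding S_def r_def by (rule contraction(3))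
  have T: "norm (T a - T b) \<le> norm (a - b)" for a b unfolding T_def
    by (rule forward_backward_nonexpansive[OF f1_convex f1_grad f1_lip Lf1_pos t_range g1_proper g1_lsc g1_convex])
  have W: "norm (W a - W b) \<le> norm (a - b)" for a b unfolding W_def
    by (rule forward_backward_nonexpansive[OF f2_convex f2_grad f2_lip Lf2_pos s_range g2_proper g2_lsc g2_convex])
  have fixY: "W y = y \<longleftrightarrow> y \<in> Y" for y unfolding W_def Y_def
    by (rule forward_backward_fixpoint_iff_argmin[OF f2_convex f2_grad f2_lip s_range(1) g2_proper g2_lsc g2_convex])
  then have "closed Y" using closed_fixpoints_nonexpansive[OF W] by (simp add: set_eq_iff)
  then obtain xs where xs: "xs \<in> Y" "\<And>y. y \<in> Y \<Longrightarrow> 0 \<le> (xs - S xs) \<bullet> (y - xs)"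
    using variational_inequality_solution_exists[OF _ convex_argmin_on_sum[OF f2_convex g2_proper g2_convex] _ r S]
      Ystar_ne unfolding Y_def by metis
  interpret hybrid_iteration S T W r \<alpha> \<beta> x xs
  proof
    show "(\<lambda>k. \<beta> k / \<alpha> k) \<longlonglongrightarrow> 0"
      using h1 \<alpha>_range \<beta>_range by (intro tendsto_zero_if_limsup_ereal_zero) (auto intro!: divide_nonneg_pos less_imp_le)
    show "(\<lambda>k. (\<bar>\<beta> (Suc k) - \<beta> k\<bar> + \<bar>\<alpha> (Suc k) - \<alpha> k\<bar>) / \<alpha> (Suc k)) \<longlonglongrightarrow> 0"
      using \<alpha>_range \<beta>_range h4 by (intro weight_increments_tendsto_zero) auto
  qed (use r S T W \<alpha>_range \<beta>_range h2 h3 x_iter fixY xs in \<open>simp_all add: S_def T_def W_def\<close>)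
  have "xs \<in> argmin_on (\<lambda>y. ereal (\<omega> y)) Y"
    using argmin_on_if_gradient_step_variational[OF \<omega>_sc _ \<omega>_grad u_range(1) xs(1)] xs(2) mu_pos
    by (simp add: S_def)
  then show ?thesis
    unfolding Let_def S_def[symmetric] W_def[symmetric] Y_def[symmetric]
    using fixY xs variational_inequality_solution_unique[OF r(2) S] tendsto_xs by blast
qed

end
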